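(* For every $H\in\mathcal C$, the predominated graph $(H,V(H)\setminus X(H))$ is an atomic MBD critical graph.
   Context: For a tree $T$, $S(T)$ is obtained by subdividing each edge of $T$ exactly once; $\mathcal S=\{S(T):T\text{ a tree}\}$ and $X(S(T))=V(T)$ (with $S(P_1)=P_1$, $X(P_1)=V(P_1)$). The double-odd replacement of an edge $xy$ of a graph removes $xy$ and adds two internally vertex-disjoint $x,y$-paths, both of odd length (if both have length $1$ this is the same as keeping the single edge $xy$). For $F\in\mathcal S$, an $F$-cactus is a cactus graph $H$ that is either $F$ or obtained from $F$ by double-odd replacements of some edges of $F$; $H$ is bipartite and $X(H)$ is the bipartition class of $H$ containing $X(F)$. $\mathcal C$ is the set of all $F$-cacti over all $F\in\mathcal S$. A predominated graph is a pair $(G,D)$ with $D\subseteq V(G)$; in the MBD game on $(G,D)$, Staller and Dominator alternately claim unclaimed vertices of $V(G)$ (including vertices of $D$), Staller first, until all are claimed; Staller wins if she claims all of $N_G[v]$ for some $v\in V(G)\setminus D$, Dominator wins otherwise. $(G,D)$ is MBD critical if Staller wins on $(G,D)$ but Dominator wins on $(G,D\cup\{v\})$ for every $v\in V(G)\setminus D$; it is atomic MBD critical if moreover $D$ is independent in $G$ and no vertex of $D$ is isolated in $G$. *)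

theory Defs
  imports Main
begin

definition wf_graph :: "'a set \<Rightarrow> 'a set set \<Rightarrow> bool" where
  "wf_graph V E \<longleftrightarrow> finite V \<and> (\<forall>e\<in>E. \<exists>a b. e = {a, b} \<and> a \<noteq> b \<and> a \<in> V \<and> b \<in> V)"

definition adj :: "'a set set \<Rightarrow> 'a \<Rightarrow> 'a \<Rightarrow> bool" where
  "adj E a b \<longleftrightarrow> {a, b} \<in> E"

definition connected_graph :: "'a set \<Rightarrow> 'a set set \<Rightarrow> bool" where
  "connected_graph V E \<longleftrightarrow> (\<forall>u\<in>V. \<forall>v\<in>V. (adj E)\<^sup>*\<^sup>* u v)"

definition path_edges :: "'a list \<Rightarrow> 'a set set" where
  "path_edges ps = set (map (\<lambda>(a, b). {a, b}) (zip ps (tl ps)))"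

definition is_cycle :: "'a set \<Rightarrow> 'a set set \<Rightarrow> 'a list \<Rightarrow> bool" where
  "is_cycle V E cs \<longleftrightarrow> distinct cs \<and> length cs \<ge> 3 \<and> set cs \<subseteq> V
     \<and> path_edges (cs @ [hd cs]) \<subseteq> E"

definition cycle_edges :: "'a list \<Rightarrow> 'a set set" where
  "cycle_edges cs = path_edges (cs @ [hd cs])"

definition is_tree :: "'a set \<Rightarrow> 'a set set \<Rightarrow> bool" where
  "is_tree V E \<longleftrightarrow> wf_graph V E \<and> V \<noteq> {} \<and> connected_graph V E \<and> (\<nexists>cs. is_cycle V E cs)"

definition is_cactus :: "'a set \<Rightarrow> 'a set set \<Rightarrow> bool" where
  "is_cactus V E \<longleftrightarrow> wf_graph V E \<and> connected_graph V E \<and>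
     (\<forall>c1 c2. is_cycle V E c1 \<and> is_cycle V E c2 \<and> cycle_edges c1 \<inter> cycle_edges c2 \<noteq> {}
        \<longrightarrow> cycle_edges c1 = cycle_edges c2)"

text \<open>(VF, EF) is the subdivision S(T) of the tree T = (VT, ET): each edge e of T
  gets a new subdivision vertex m e.\<close>
definition is_subdivision :: "'a set \<Rightarrow> 'a set set \<Rightarrow> 'a set \<Rightarrow> 'a set set \<Rightarrow> bool" where
  "is_subdivision VT ET VF EF \<longleftrightarrow> VT \<subseteq> VF \<and>
     (\<exists>m. bij_betw m ET (VF - VT) \<and> EF = {{x, m e} | x e. e \<in> ET \<and> x \<in> e})"

text \<open>(VF, EF) belongs to the class S, with X(F) = XF.\<close>
definition in_S :: "'a set \<Rightarrow> 'a set set \<Rightarrow> 'a set \<Rightarrow> bool" where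
  "in_S VF EF XF \<longleftrightarrow> (\<exists>ET. is_tree XF ET \<and> is_subdivision XF ET VF EF)"

text \<open>An x,y-path (vertex list) of odd length (odd number of edges).\<close>
definition odd_path :: "'a list \<Rightarrow> 'a \<Rightarrow> 'a \<Rightarrow> bool" where
  "odd_path p x y \<longleftrightarrow> distinct p \<and> length p \<ge> 2 \<and> even (length p) \<and> hd p = x \<and> last p = y"

text \<open>dor VF EF V E R: (V,E) is obtained from (VF,EF) by double-odd replacements
  of the (distinct) edges in R \<subseteq> EF, performed one after another; the internal
  vertices of the new paths are fresh.\<close>
inductive dor :: "'a set \<Rightarrow> 'a set set \<Rightarrow> 'a set \<Rightarrow> 'a set set \<Rightarrow> 'a set set \<Rightarrow> bool"
  for VF EF where
  base: "dor VF EF VF EF {}"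
| step: "\<lbrakk> dor VF EF V E R; {x, y} \<in> EF; {x, y} \<notin> R; {x, y} \<in> E; x \<noteq> y;
           odd_path p x y; odd_path q x y; set p \<inter> set q = {x, y};
           (set p \<union> set q) \<inter> V = {x, y} \<rbrakk>
         \<Longrightarrow> dor VF EF (V \<union> set p \<union> set q)
               ((E - {{x, y}}) \<union> path_edges p \<union> path_edges q) (insert {x, y} R)"

definition is_F_cactus :: "'a set \<Rightarrow> 'a set set \<Rightarrow> 'a set \<Rightarrow> 'a set \<Rightarrow> 'a set set \<Rightarrow> bool" where
  "is_F_cactus VF EF XF V E \<longleftrightarrow> in_S VF EF XF \<and> is_cactus V E \<and> (\<exists>R. dor VF EF V E R)"

definition closed_nbhd :: "'a set \<Rightarrow> 'a set set \<Rightarrow> 'a \<Rightarrow> 'a set" where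
  "closed_nbhd V E v = insert v {u \<in> V. {u, v} \<in> E}"

text \<open>State: S = vertices claimed by
  Staller, U = unclaimed vertices, st = True iff it is Staller's turn.
  staller_wins holds iff Staller has a winning strategy from this state.\<close>
inductive staller_wins :: "'a set \<Rightarrow> 'a set set \<Rightarrow> 'a set \<Rightarrow> 'a set \<Rightarrow> 'a set \<Rightarrow> bool \<Rightarrow> bool"
  for V E D where
  fin: "\<lbrakk> U = {}; v \<in> V - D; closed_nbhd V E v \<subseteq> S \<rbrakk> \<Longrightarrow> staller_wins V E D S U st"
| stmove: "\<lbrakk> u \<in> U; staller_wins V E D (insert u S) (U - {u}) False \<rbrakk>
           \<Longrightarrow> staller_wins V E D S U True"
| dommove: "\<lbrakk> U \<noteq> {}; \<forall>u\<in>U. staller_wins V E D S (U - {u}) True \<rbrakk>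
           \<Longrightarrow> staller_wins V E D S U False"

definition staller_wins_MBD :: "'a set \<Rightarrow> 'a set set \<Rightarrow> 'a set \<Rightarrow> bool" where
  "staller_wins_MBD V E D \<longleftrightarrow> staller_wins V E D {} V True"

definition dominator_wins_MBD :: "'a set \<Rightarrow> 'a set set \<Rightarrow> 'a set \<Rightarrow> bool" where
  "dominator_wins_MBD V E D \<longleftrightarrow> \<not> staller_wins_MBD V E D"

definition MBD_critical :: "'a set \<Rightarrow> 'a set set \<Rightarrow> 'a set \<Rightarrow> bool" where
  "MBD_critical V E D \<longleftrightarrow> D \<subseteq> V \<and> staller_wins_MBD V E D \<and>
     (\<forall>v\<in>V - D. dominator_wins_MBD V E (D \<union> {v}))"

definition atomic_MBD_critical :: "'a set \<Rightarrow> 'a set set \<Rightarrow> 'a set \<Rightarrow> bool" where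
  "atomic_MBD_critical V E D \<longleftrightarrow> MBD_critical V E D \<and>
     (\<forall>a\<in>D. \<forall>b\<in>D. {a, b} \<notin> E) \<and> (\<forall>a\<in>D. \<exists>b\<in>V. {a, b} \<in> E)"

end

theory Submission
  imports Defs "HOL-Library.Disjoint_Sets"
begin

(*
  An F-cactus is the subdivision S(T) of a tree T in which some edges from a tree vertex x to a
  subdivision vertex m have been replaced by even cycles through x and m.  Since every edge has
  exactly one end in X, the X-vertices on such a cycle are those at even distance from x.
  Both strategies are built by removing a leaf l of T, with neighbour p and subdivision vertex m.

  Staller opens with m.  If Dominator does not answer in the gadget of l, she walks along it,
  every claim forcing Dominator's reply, until an X-vertex is surrounded.  Otherwise she forces
  along the gadget of p from both ends towards p; afterwards p has no unclaimed neighbour outside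
  the cactus of T - l, where she wins by induction.

  Once an X-vertex v is declared dominated, the other X-vertices are covered by pairwise disjoint
  edges avoiding v (again by induction on T), and Dominator wins with the pairing strategy.
*)

section \<open>Walks\<close>

lemma path_edges_Nil [simp]: "path_edges [] = {}"
  and path_edges_single [simp]: "path_edges [a] = {}"
  and path_edges_Cons_Cons [simp]: "path_edges (a # b # r) = insert {a, b} (path_edges (b # r))"
  by (simp_all add: path_edges_def)

lemma mem_path_edges_iff: "q \<in> path_edges xs \<longleftrightarrow> (\<exists>i. Suc i < length xs \<and> q = {xs ! i, xs ! Suc i})"
proof (induction xs rule: induct_list012)
  case (3 a b r)
  have "q \<in> path_edges (a # b # r) \<longleftrightarrow> q = {a, b} \<or> (\<exists>i. Suc i < length (b # r) \<and> q = {(b # r) ! i, (b # r) ! Suc i})"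
    using 3 by simp
  also have "\<dots> \<longleftrightarrow> (\<exists>i. Suc i < length (a # b # r) \<and> q = {(a # b # r) ! i, (a # b # r) ! Suc i})"
    by (auto simp: less_Suc_eq_0_disj)
  finally show ?case .
qed auto

lemma path_edges_subset_Cons: "path_edges xs \<subseteq> path_edges (a # xs)"
  by (cases xs) auto

lemma path_edges_append:
  "path_edges (xs @ ys) = path_edges xs \<union> path_edges ys \<union>
     (if xs \<noteq> [] \<and> ys \<noteq> [] then {{last xs, hd ys}} else {})"
proof (induction xs rule: induct_list012)
  case (2 a) then show ?case by (cases ys) auto
qed auto

lemma path_edges_rev: "path_edges (rev xs) = path_edges xs"
proof (induction xs rule: induct_list012)
  case (3 a b r)
  have "path_edges (rev (a # b # r)) = path_edges (rev (b # r) @ [a])" by simp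
  also have "\<dots> = path_edges (rev (b # r)) \<union> {{b, a}}" by (simp add: path_edges_append)
  finally show ?case using 3 by (auto simp: insert_commute)
qed auto

lemma path_edges_take_subset: "path_edges (take n xs) \<subseteq> path_edges xs"
  unfolding mem_path_edges_iff subset_iff by fastforce

lemma path_edges_drop_subset: "path_edges (drop n xs) \<subseteq> path_edges xs"
proof
  fix q assume "q \<in> path_edges (drop n xs)"
  then obtain i where "Suc i < length (drop n xs)" "q = {drop n xs ! i, drop n xs ! Suc i}"
    unfolding mem_path_edges_iff by blast
  then show "q \<in> path_edges xs" unfolding mem_path_edges_iff by (intro exI[of _ "n + i"]) auto
qed

lemma path_edges_subset_set: "q \<in> path_edges xs \<Longrightarrow> q \<subseteq> set xs"
  unfolding mem_path_edges_iff by auto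

lemma nth_notin_set_take: "distinct xs \<Longrightarrow> k < length xs \<Longrightarrow> n \<le> k \<Longrightarrow> xs ! k \<notin> set (take n xs)"
  by (auto simp: in_set_conv_nth nth_eq_iff_index_eq)

lemma set_take_Un_set_drop_Suc:
  assumes "distinct xs" "k < length xs"
  shows "set (take k xs) \<union> set (drop (Suc k) xs) = set xs - {xs ! k}"
proof -
  have xs: "xs = take k xs @ xs ! k # drop (Suc k) xs" by (rule id_take_nth_drop[OF assms(2)])
  then have "distinct (take k xs @ xs ! k # drop (Suc k) xs)" using assms(1) by simp
  then show ?thesis by (subst (3) xs) auto
qed

abbreviation closed_walk :: "'a \<Rightarrow> 'a list \<Rightarrow> 'a list" where
  "closed_walk \<mu> W \<equiv> \<mu> # W @ [\<mu>]"

lemma path_edges_closed_walk_rev: "path_edges (closed_walk \<mu> (rev W)) = path_edges (closed_walk \<mu> W)"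
  using path_edges_rev[of "closed_walk \<mu> W"] by simp

lemma path_edges_subset_closed_walk: "path_edges W \<subseteq> path_edges (closed_walk \<mu> W)"
  using path_edges_append[of W "[\<mu>]"] path_edges_subset_Cons[of "W @ [\<mu>]" \<mu>] by auto

lemma nth_closed_walk:
  "k < length W + 2 \<Longrightarrow>
    closed_walk \<mu> W ! k = (if k = 0 then \<mu> else if k \<le> length W then W ! (k - 1) else \<mu>)"
  by (cases k) (auto simp: nth_append)

lemma closed_walk_neighbour:
  assumes "distinct W" "\<mu> \<notin> set W" "j < length W" "{W ! j, b} \<in> path_edges (closed_walk \<mu> W)"
  shows "b = \<mu> \<or> (0 < j \<and> b = W ! (j - 1)) \<or> (Suc j < length W \<and> b = W ! Suc j)"
proof -
  let ?L = "closed_walk \<mu> W"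
  obtain i where i: "Suc i < length ?L" "{W ! j, b} = {?L ! i, ?L ! Suc i}"
    using assms(4) unfolding mem_path_edges_iff by blast
  have position: "k = Suc j" if "k < length ?L" "?L ! k = W ! j" for k
  proof -
    have "W ! j \<noteq> \<mu>" using assms(2,3) nth_mem by metis
    then have "k \<noteq> 0 \<and> k \<le> length W \<and> W ! (k - 1) = W ! j"
      using nth_closed_walk[of k W \<mu>] that by (auto split: if_splits)
    then show ?thesis using assms(1,3) nth_eq_iff_index_eq by fastforce
  qed
  consider "W ! j = ?L ! i" | "W ! j = ?L ! Suc i" using i(2) by blast
  then show ?thesis
  proof cases
    case 1
    then have "i = Suc j" using position[of i] i(1) by simp
    then have "b = ?L ! Suc (Suc j)" using i(2) 1 by (auto simp: doubleton_eq_iff)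
    then show ?thesis using nth_closed_walk[of "Suc (Suc j)" W \<mu>] assms(3) i(1) \<open>i = Suc j\<close>
      by (auto split: if_splits)
  next
    case 2
    then have "i = j" using position[of "Suc i"] i(1) by simp
    then have "b = ?L ! j" using i(2) 2 by (auto simp: doubleton_eq_iff)
    then show ?thesis using nth_closed_walk[of j W \<mu>] assms(3) by (cases j) (auto split: if_splits)
  qed
qed

fun consecutive_pairs :: "'a list \<Rightarrow> 'a set set" where
  "consecutive_pairs (a # b # r) = insert {a, b} (consecutive_pairs r)"
| "consecutive_pairs _ = {}"

lemma consecutive_pairs_subset_path_edges: "consecutive_pairs xs \<subseteq> path_edges xs"
proof (induction xs rule: consecutive_pairs.induct)
  case (1 a b r)
  then show ?case using path_edges_subset_Cons[of r b] by auto
qed auto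

lemma Union_consecutive_pairs: "even (length xs) \<Longrightarrow> \<Union> (consecutive_pairs xs) = set xs"
  by (induction xs rule: consecutive_pairs.induct) auto

lemma Union_consecutive_pairs_subset: "\<Union> (consecutive_pairs xs) \<subseteq> set xs"
  by (induction xs rule: consecutive_pairs.induct) auto

lemma disjoint_consecutive_pairs: "distinct xs \<Longrightarrow> disjoint (consecutive_pairs xs)"
proof (induction xs rule: consecutive_pairs.induct)
  case (1 a b r)
  then show ?case using Union_consecutive_pairs_subset[of r]
    by (auto simp: pairwise_insert disjnt_def)
qed auto

lemma path_edges_closed_walk:
  "W \<noteq> [] \<Longrightarrow> path_edges (closed_walk \<mu> W) = path_edges W \<union> {{\<mu>, hd W}, {last W, \<mu>}}"
  using path_edges_append[of "[\<mu>]" "W @ [\<mu>]"] path_edges_append[of W "[\<mu>]"] by auto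

lemma path_edges_distinct:
  assumes "distinct xs" "q \<in> path_edges xs"
  shows "\<exists>a b. q = {a, b} \<and> a \<noteq> b \<and> a \<in> set xs \<and> b \<in> set xs"
proof -
  obtain i where "Suc i < length xs" "q = {xs ! i, xs ! Suc i}"
    using assms(2) unfolding mem_path_edges_iff by blast
  moreover have "xs ! i \<noteq> xs ! Suc i" using assms(1) \<open>Suc i < length xs\<close> by (simp add: nth_eq_iff_index_eq)
  ultimately show ?thesis by (metis Suc_lessD nth_mem)
qed

definition odd_positions :: "'a list \<Rightarrow> 'a set" where
  "odd_positions xs = {xs ! j | j. j < length xs \<and> odd j}"

lemma odd_positions_split:
  assumes "length xs = 2 * k + 1" "i \<le> k"
  shows "odd_positions xs = (\<lambda>j. xs ! (2 * j + 1)) ` {..<i} \<union> (\<lambda>j. rev xs ! (2 * j + 1)) ` {..<k - i}"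
proof -
  have rev: "rev xs ! (2 * j + 1) = xs ! (2 * (k - j - 1) + 1)" if "j < k" for j
  proof -
    have "length xs - Suc (2 * j + 1) = 2 * (k - j - 1) + 1" using assms(1) that by simp
    then show ?thesis using assms(1) that by (simp add: rev_nth)
  qed
  have "odd_positions xs = (\<lambda>j. xs ! (2 * j + 1)) ` {..<k}"
  proof
    show "odd_positions xs \<subseteq> (\<lambda>j. xs ! (2 * j + 1)) ` {..<k}"
    proof
      fix y assume "y \<in> odd_positions xs"
      then obtain j where j: "y = xs ! j" "j < length xs" "odd j" unfolding odd_positions_def by blast
      then obtain q where "j = 2 * q + 1" by (blast elim: oddE)
      then show "y \<in> (\<lambda>j. xs ! (2 * j + 1)) ` {..<k}" using j(1,2) assms(1) by auto
    qed
    show "(\<lambda>j. xs ! (2 * j + 1)) ` {..<k} \<subseteq> odd_positions xs"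
      unfolding odd_positions_def using assms(1) by fastforce
  qed
  also have "\<dots> = (\<lambda>j. xs ! (2 * j + 1)) ` {..<i} \<union> (\<lambda>j. xs ! (2 * j + 1)) ` {i..<k}"
    using assms(2) by (metis image_Un ivl_disj_un_one(2))
  also have "(\<lambda>j. xs ! (2 * j + 1)) ` {i..<k} = (\<lambda>j. rev xs ! (2 * j + 1)) ` {..<k - i}"
  proof
    show "(\<lambda>j. xs ! (2 * j + 1)) ` {i..<k} \<subseteq> (\<lambda>j. rev xs ! (2 * j + 1)) ` {..<k - i}"
    proof
      fix y assume "y \<in> (\<lambda>j. xs ! (2 * j + 1)) ` {i..<k}"
      then obtain q where q: "y = xs ! (2 * q + 1)" "i \<le> q" "q < k" by auto
      then have "y = rev xs ! (2 * (k - q - 1) + 1)" "k - q - 1 < k - i" using rev[of "k - q - 1"] by auto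
      then show "y \<in> (\<lambda>j. rev xs ! (2 * j + 1)) ` {..<k - i}" by blast
    qed
    show "(\<lambda>j. rev xs ! (2 * j + 1)) ` {..<k - i} \<subseteq> (\<lambda>j. xs ! (2 * j + 1)) ` {i..<k}"
      using rev by force
  qed
  finally show ?thesis .
qed

definition walk_pairs :: "'a \<Rightarrow> 'a list \<Rightarrow> 'a set set" where
  "walk_pairs \<mu> W = consecutive_pairs (W @ [\<mu>])"

definition walk_pairs_avoiding :: "'a list \<Rightarrow> nat \<Rightarrow> 'a set set" where
  "walk_pairs_avoiding W j = consecutive_pairs (take (2 * j) W) \<union> consecutive_pairs (drop (Suc (2 * j)) W)"

lemma walk_pairs_subset: "walk_pairs \<mu> W \<subseteq> path_edges (closed_walk \<mu> W)"
  unfolding walk_pairs_def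
  using consecutive_pairs_subset_path_edges[of "W @ [\<mu>]"] path_edges_subset_Cons[of "W @ [\<mu>]" \<mu>] by simp

lemma Union_walk_pairs: "odd (length W) \<Longrightarrow> \<Union> (walk_pairs \<mu> W) = insert \<mu> (set W)"
  unfolding walk_pairs_def by (subst Union_consecutive_pairs) auto

lemma disjoint_walk_pairs: "distinct W \<Longrightarrow> \<mu> \<notin> set W \<Longrightarrow> disjoint (walk_pairs \<mu> W)"
  unfolding walk_pairs_def by (rule disjoint_consecutive_pairs) simp

lemma walk_pairs_avoiding_subset: "walk_pairs_avoiding W j \<subseteq> path_edges (closed_walk \<mu> W)"
  unfolding walk_pairs_avoiding_def
  using consecutive_pairs_subset_path_edges[of "take (2 * j) W"]
    consecutive_pairs_subset_path_edges[of "drop (Suc (2 * j)) W"]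
    path_edges_take_subset[of "2 * j" W] path_edges_drop_subset[of "Suc (2 * j)" W]
    path_edges_subset_closed_walk[of W \<mu>] by blast

lemma Union_walk_pairs_avoiding:
  assumes "distinct W" "odd (length W)" "2 * j < length W"
  shows "\<Union> (walk_pairs_avoiding W j) = set W - {W ! (2 * j)}"
proof -
  have "even (length (take (2 * j) W))" "even (length (drop (Suc (2 * j)) W))" using assms by auto
  then show ?thesis
    using Union_consecutive_pairs set_take_Un_set_drop_Suc[OF assms(1,3)]
    unfolding walk_pairs_avoiding_def Union_Un_distrib by metis
qed

lemma disjoint_walk_pairs_avoiding:
  assumes "distinct W"
  shows "disjoint (walk_pairs_avoiding W j)"
  unfolding walk_pairs_avoiding_def
proof (rule disjoint_union)
  show "disjoint (consecutive_pairs (take (2 * j) W))" "disjoint (consecutive_pairs (drop (Suc (2 * j)) W))"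
    using assms by (simp_all add: disjoint_consecutive_pairs)
  have "set (take (2 * j) W) \<inter> set (drop (Suc (2 * j)) W) = {}"
    using set_take_disj_set_drop_if_distinct[OF assms, of "2 * j" "Suc (2 * j)"] by simp
  then show "\<Union> (consecutive_pairs (take (2 * j) W)) \<inter> \<Union> (consecutive_pairs (drop (Suc (2 * j)) W)) = {}"
    using Union_consecutive_pairs_subset[of "take (2 * j) W"]
      Union_consecutive_pairs_subset[of "drop (Suc (2 * j)) W"] by blast
qed

lemma odd_path_rev: "odd_path p x y \<Longrightarrow> odd_path (rev p) y x"
  unfolding odd_path_def by (auto simp: hd_rev last_rev)

definition glue_paths :: "'a list \<Rightarrow> 'a list \<Rightarrow> 'a list" where
  "glue_paths p q = rev (butlast p) @ tl (butlast q)"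

context
  fixes p q :: "'a list" and a b :: 'a
  assumes p: "odd_path p a b" and q: "odd_path q a b" and meet: "set p \<inter> set q = {a, b}"
begin

lemma odd_paths_facts:
  "p = butlast p @ [b]" "q = a # tl (butlast q) @ [b]" "distinct p" "distinct q"
  "2 \<le> length p" "even (length p)" "2 \<le> length q" "even (length q)" "p ! 0 = a" "hd p = a" "a \<in> set p"
proof -
  show "distinct p" "distinct q" "2 \<le> length p" "even (length p)" "2 \<le> length q" "even (length q)"
    using p q unfolding odd_path_def by auto
  have "p \<noteq> []" "last p = b" "hd p = a" using p unfolding odd_path_def by auto
  then show "p = butlast p @ [b]" "p ! 0 = a" "hd p = a" "a \<in> set p"
    by (metis append_butlast_last_id, metis hd_conv_nth, simp, metis hd_in_set)
  obtain r where "q = a # r" "r \<noteq> []" using q unfolding odd_path_def by (cases q) (force simp: Suc_le_eq)+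
  moreover have "last q = b" using q unfolding odd_path_def by simp
  ultimately show "q = a # tl (butlast q) @ [b]" by (metis append_butlast_last_id butlast.simps(2) last_ConsR list.sel(3))
qed

lemma closed_walk_glue_paths: "closed_walk b (glue_paths p q) = rev p @ tl q"
proof -
  have "rev p = rev (butlast p @ [b])" using odd_paths_facts(1) by (rule arg_cong)
  also have "\<dots> = b # rev (butlast p)" by simp
  finally have rev_p: "rev p = b # rev (butlast p)" .
  have "tl q = tl (a # tl (butlast q) @ [b])" using odd_paths_facts(2) by (rule arg_cong)
  then have tl_q: "tl q = tl (butlast q) @ [b]" by simp
  show ?thesis unfolding glue_paths_def rev_p tl_q by simp
qed

lemma distinct_glue_parts:
  "distinct (butlast p) \<and> b \<notin> set (butlast p)" "distinct (tl (butlast q)) \<and> a \<notin> set (tl (butlast q)) \<and> b \<notin> set (tl (butlast q))"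
proof -
  have "distinct p = distinct (butlast p @ [b])" using odd_paths_facts(1) by (rule arg_cong)
  then show "distinct (butlast p) \<and> b \<notin> set (butlast p)" using odd_paths_facts(3) by simp
  have "distinct q = distinct (a # tl (butlast q) @ [b])" using odd_paths_facts(2) by (rule arg_cong)
  then show "distinct (tl (butlast q)) \<and> a \<notin> set (tl (butlast q)) \<and> b \<notin> set (tl (butlast q))"
    using odd_paths_facts(4) by simp
qed

lemma path_edges_glue_paths: "path_edges (closed_walk b (glue_paths p q)) = path_edges p \<union> path_edges q"
proof -
  let ?r = "tl (butlast q) @ [b]"
  have "last (rev p) = a" using odd_paths_facts(10) by (simp add: last_rev)
  moreover have "tl q = ?r" using odd_paths_facts(2) by (rule arg_cong[of _ _ tl, THEN trans]) simp
  ultimately have "path_edges (rev p @ tl q) = path_edges p \<union> path_edges ?r \<union> {{a, hd ?r}}"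
    using path_edges_append[of "rev p" ?r] odd_paths_facts(5) by (auto simp: path_edges_rev)
  moreover have "path_edges (a # ?r) = insert {a, hd ?r} (path_edges ?r)"
    by (cases ?r) auto
  ultimately show ?thesis unfolding closed_walk_glue_paths using odd_paths_facts(2) by auto
qed

lemma set_glue_paths: "insert b (set (glue_paths p q)) = set p \<union> set q"
proof -
  have "set q = insert a (set (tl q))" using odd_paths_facts(2) by (metis list.sel(3) list.simps(15))
  moreover note odd_paths_facts(11)
  moreover have "set (closed_walk b (glue_paths p q)) = set (rev p @ tl q)"
    unfolding closed_walk_glue_paths ..
  ultimately show ?thesis by auto
qed

lemma b_notin_glue_paths: "b \<notin> set (glue_paths p q)"
  using distinct_glue_parts unfolding glue_paths_def by auto

lemma distinct_glue_paths: "distinct (glue_paths p q)"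
proof -
  have "set (butlast p) \<inter> set (tl (butlast q)) = {}"
  proof (rule equals0I)
    fix z assume z: "z \<in> set (butlast p) \<inter> set (tl (butlast q))"
    have "set (tl (butlast q)) \<subseteq> set q" using odd_paths_facts(2) by (metis set_subset_Cons Un_upper1 set_append subset_trans)
    then have "z \<in> set p \<inter> set q" using z in_set_butlastD by fast
    moreover have "z \<noteq> a" "z \<noteq> b" using z distinct_glue_parts by auto
    ultimately show False using meet by blast
  qed
  then show ?thesis using distinct_glue_parts unfolding glue_paths_def by simp
qed

lemma length_glue_paths: "length (glue_paths p q) = (length p - 1) + (length q - 2)"
  unfolding glue_paths_def by simp

lemma odd_length_glue_paths: "odd (length (glue_paths p q))"
  unfolding length_glue_paths using odd_paths_facts(5-8) by auto

lemma glue_paths_even_position: "2 * ((length p - 2) div 2) < length (glue_paths p q) \<and>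
    glue_paths p q ! (2 * ((length p - 2) div 2)) = a"
proof
  have two: "2 * ((length p - 2) div 2) = length p - 2" using odd_paths_facts(5,6) by auto
  then show "2 * ((length p - 2) div 2) < length (glue_paths p q)"
    unfolding length_glue_paths using odd_paths_facts(5) by simp
  have "length p - 2 < length (rev (butlast p))" using odd_paths_facts(5) by simp
  then have "glue_paths p q ! (length p - 2) = rev (butlast p) ! (length p - 2)"
    unfolding glue_paths_def by (simp only: nth_append if_True)
  also have "\<dots> = p ! 0" using odd_paths_facts(5) by (simp add: rev_nth nth_butlast)
  also have "\<dots> = a" by (rule odd_paths_facts(9))
  finally show "glue_paths p q ! (2 * ((length p - 2) div 2)) = a" unfolding two .
qed

end

section \<open>Graphs and trees\<close>

lemma wf_graph_edgeD: "wf_graph V E \<Longrightarrow> e \<in> E \<Longrightarrow> \<exists>a b. e = {a, b} \<and> a \<noteq> b \<and> a \<in> V \<and> b \<in> V"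
  unfolding wf_graph_def by blast

lemma tree_single_vertex_no_edges:
  assumes "is_tree XF ET" "card XF = 1"
  shows "ET = {}"
proof (rule ccontr)
  assume "ET \<noteq> {}"
  then obtain a b where "a \<noteq> b" "a \<in> XF" "b \<in> XF"
    using assms(1) wf_graph_edgeD unfolding is_tree_def by blast
  then show False using assms(2) by (auto simp: card_1_singleton_iff)
qed

lemma tree_path_end_is_leaf:
  assumes tree: "is_tree XF ET"
    and path: "distinct (l # v # rest)" "set (l # v # rest) \<subseteq> XF" "path_edges (l # v # rest) \<subseteq> ET"
    and maximal: "\<forall>z. {l, z} \<in> ET \<longrightarrow> z \<in> set (l # v # rest)"
    and e: "e \<in> ET" "l \<in> e"
  shows "e = {l, v}"
proof -
  let ?ps = "l # v # rest"
  obtain z where z: "e = {l, z}" "z \<noteq> l"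
    using wf_graph_edgeD[of XF ET e] tree e unfolding is_tree_def by blast
  then obtain k where k: "k < length ?ps" "?ps ! k = z" "k \<noteq> 0"
    using maximal e by (metis in_set_conv_nth nth_Cons_0)
  show ?thesis
  proof (cases "k = 1")
    case True then show ?thesis using k z by simp
  next
    case False
    text \<open>Otherwise the path up to \<open>z\<close> closes a cycle through the edge \<open>{l, z}\<close>.\<close>
    define cs where "cs = take (Suc k) ?ps"
    have "cs \<noteq> []" "hd cs = l" "last cs = z" unfolding cs_def using k by (auto simp: last_conv_nth)
    then have "path_edges (cs @ [hd cs]) = path_edges cs \<union> {{z, l}}"
      by (simp add: path_edges_append)
    also have "\<dots> \<subseteq> ET"
      using path_edges_take_subset[of "Suc k" ?ps] path(3) z e unfolding cs_def by (auto simp: insert_commute)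
    finally have "path_edges (cs @ [hd cs]) \<subseteq> ET" .
    moreover have "distinct cs" using path(1) unfolding cs_def by (rule distinct_take)
    moreover have "set cs \<subseteq> XF" using path(2) set_take_subset unfolding cs_def by fast
    moreover have "3 \<le> length cs" using k False unfolding cs_def by simp
    ultimately have "is_cycle XF ET cs" unfolding is_cycle_def by simp
    then show ?thesis using tree unfolding is_tree_def by blast
  qed
qed

text \<open>The first vertex of a longest path is a leaf.\<close>

lemma tree_has_leaf:
  assumes tree: "is_tree XF ET" and "\<not> card XF \<le> 1"
  obtains l p where "{l, p} \<in> ET" "l \<noteq> p" "\<forall>e\<in>ET. l \<in> e \<longrightarrow> e = {l, p}"
proof -
  have fin: "finite XF" and wf: "wf_graph XF ET" and con: "connected_graph XF ET"
    using tree unfolding is_tree_def wf_graph_def by auto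
  obtain u v where uv: "u \<in> XF" "v \<in> XF" "u \<noteq> v"
    using assms(2) fin by (auto simp: card_le_Suc0_iff_eq)
  have "(adj ET)\<^sup>*\<^sup>* u v" using con uv unfolding connected_graph_def by blast
  then obtain w where "adj ET u w" using uv(3) by (metis converse_rtranclpE)
  then have uw: "{u, w} \<in> ET" unfolding adj_def .
  obtain a b where ab: "{u, w} = {a, b}" "a \<noteq> b" "a \<in> XF" "b \<in> XF"
    using wf_graph_edgeD[OF wf uw] by blast
  define PS where "PS = {ps. distinct ps \<and> set ps \<subseteq> XF \<and> path_edges ps \<subseteq> ET}"
  have "PS \<subseteq> {xs. set xs \<subseteq> XF \<and> length xs \<le> card XF}"
    unfolding PS_def using fin by (auto intro: card_mono simp flip: distinct_card)
  then have "finite PS" using finite_lists_length_le[OF fin] finite_subset by blast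
  moreover have "[a, b] \<in> PS" unfolding PS_def using ab uw by auto
  ultimately have "Max (length ` PS) \<in> length ` PS" by (intro Max_in) auto
  then obtain ps where ps: "ps \<in> PS" "length ps = Max (length ` PS)" by auto
  have longest: "length qs \<le> length ps" if "qs \<in> PS" for qs
    using ps(2) Max_ge[OF finite_imageI[OF \<open>finite PS\<close>] imageI[OF that]] by simp
  have "2 \<le> length ps" using longest[OF \<open>[a, b] \<in> PS\<close>] by simp
  then obtain l v rest where ps_eq: "ps = l # v # rest" by (metis Suc_le_length_iff numeral_2_eq_2)
  have path: "distinct ps" "set ps \<subseteq> XF" "path_edges ps \<subseteq> ET" using ps(1) unfolding PS_def by auto
  have "z \<in> set ps" if "{l, z} \<in> ET" for z
  proof (rule ccontr)
    assume "z \<notin> set ps"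
    moreover have "z \<in> XF" using wf_graph_edgeD[OF wf that] by (auto simp: doubleton_eq_iff)
    ultimately have "z # ps \<in> PS" unfolding PS_def using path that ps_eq by (auto simp: insert_commute)
    then show False using longest by fastforce
  qed
  then have "\<forall>e\<in>ET. l \<in> e \<longrightarrow> e = {l, v}"
    using tree_path_end_is_leaf[OF tree path[unfolded ps_eq]] ps_eq by blast
  moreover have "{l, v} \<in> ET" "l \<noteq> v" using path ps_eq by auto
  ultimately show thesis using that by blast
qed

lemma adj_rtranclp_remove_leaf:
  assumes "(adj ET)\<^sup>*\<^sup>* u w" "u \<noteq> l" and leaf: "l \<noteq> p" "\<forall>e\<in>ET. l \<in> e \<longrightarrow> e = {l, p}"
  shows "(w \<noteq> l \<longrightarrow> (adj (ET - {{l, p}}))\<^sup>*\<^sup>* u w) \<and> (w = l \<longrightarrow> (adj (ET - {{l, p}}))\<^sup>*\<^sup>* u p)"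
  using assms(1,2)
proof (induction rule: rtranclp_induct)
  case (step y z)
  let ?E = "ET - {{l, p}}"
  have yz: "{y, z} \<in> ET" using step.hyps(2) unfolding adj_def .
  have IH: "(y \<noteq> l \<longrightarrow> (adj ?E)\<^sup>*\<^sup>* u y) \<and> (y = l \<longrightarrow> (adj ?E)\<^sup>*\<^sup>* u p)"
    using step.IH step.prems by blast
  show ?case
  proof (cases "y = l \<or> z = l")
    case True
    then have "{y, z} = {l, p}" using leaf(2)[rule_format, OF yz] by blast
    then have "(y = l \<and> z = p) \<or> (y = p \<and> z = l)" by (auto simp: doubleton_eq_iff)
    then show ?thesis using IH leaf(1) by blast
  next
    case False
    then have "{y, z} \<noteq> {l, p}" by (auto simp: doubleton_eq_iff)
    then have "adj ?E y z" using yz unfolding adj_def by blast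
    moreover have "(adj ?E)\<^sup>*\<^sup>* u y" using IH False by blast
    ultimately have "(adj ?E)\<^sup>*\<^sup>* u z" by (rule rtranclp.rtrancl_into_rtrancl[rotated])
    then show ?thesis using False by blast
  qed
qed simp

lemma is_tree_remove_leaf:
  assumes tree: "is_tree XF ET" and leaf: "{l, p} \<in> ET" "l \<noteq> p" "\<forall>e\<in>ET. l \<in> e \<longrightarrow> e = {l, p}"
  shows "is_tree (XF - {l}) (ET - {{l, p}})"
proof -
  let ?E = "ET - {{l, p}}"
  have wf: "wf_graph XF ET" and con: "connected_graph XF ET" and acyclic: "\<nexists>cs. is_cycle XF ET cs"
    using tree unfolding is_tree_def by auto
  have "p \<in> XF" using wf_graph_edgeD[OF wf leaf(1)] by (auto simp: doubleton_eq_iff)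
  have "wf_graph (XF - {l}) ?E"
    unfolding wf_graph_def
  proof (intro conjI ballI)
    show "finite (XF - {l})" using wf unfolding wf_graph_def by simp
    fix e assume e: "e \<in> ?E"
    then obtain a b where "e = {a, b}" "a \<noteq> b" "a \<in> XF" "b \<in> XF" using wf_graph_edgeD[OF wf] by blast
    moreover have "l \<notin> e" using e leaf(3) by blast
    ultimately show "\<exists>a b. e = {a, b} \<and> a \<noteq> b \<and> a \<in> XF - {l} \<and> b \<in> XF - {l}" by blast
  qed
  moreover have "connected_graph (XF - {l}) ?E"
    unfolding connected_graph_def
  proof (intro ballI)
    fix u v assume "u \<in> XF - {l}" "v \<in> XF - {l}"
    then show "(adj ?E)\<^sup>*\<^sup>* u v"
      using adj_rtranclp_remove_leaf[of ET u v l p] leaf(2,3) con unfolding connected_graph_def by blast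
  qed
  moreover have "\<not> is_cycle (XF - {l}) ?E cs" for cs
    using acyclic unfolding is_cycle_def by auto
  moreover have "XF - {l} \<noteq> {}" using \<open>p \<in> XF\<close> leaf(2) by blast
  ultimately show ?thesis unfolding is_tree_def by blast
qed

lemma edge_subset_closed_nbhd:
  assumes "wf_graph V E" "q \<in> E" "x \<in> q"
  shows "q \<subseteq> closed_nbhd V E x"
proof
  fix z assume "z \<in> q"
  obtain a b where "q = {a, b}" "a \<in> V" "b \<in> V" using wf_graph_edgeD[OF assms(1,2)] by blast
  then show "z \<in> closed_nbhd V E x"
    using assms(2,3) \<open>z \<in> q\<close> unfolding closed_nbhd_def by (auto simp: insert_commute)
qed

lemma one_end_in_X_independent:
  assumes "\<forall>e\<in>E. card (e \<inter> X) = 1" "a \<notin> X" "b \<notin> X"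
  shows "{a, b} \<notin> E"
proof
  assume "{a, b} \<in> E"
  then have "card ({a, b} \<inter> X) = 1" using assms(1) by blast
  moreover have "{a, b} \<inter> X = {}" using assms(2,3) by blast
  ultimately show False by simp
qed

lemma connected_graph_has_neighbour:
  assumes "wf_graph V E" "connected_graph V E" "a \<in> V" "b \<in> V" "a \<noteq> b"
  shows "\<exists>c\<in>V. {a, c} \<in> E"
proof -
  have "(adj E)\<^sup>*\<^sup>* a b" using assms(2-4) unfolding connected_graph_def by blast
  then obtain c where "adj E a c" using assms(5) by (metis converse_rtranclpE)
  then have "{a, c} \<in> E" unfolding adj_def .
  moreover have "c \<in> V" using wf_graph_edgeD[OF assms(1) \<open>{a, c} \<in> E\<close>] by (auto simp: doubleton_eq_iff)
  ultimately show ?thesis by blast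
qed

section \<open>The Maker-Breaker domination game\<close>

lemma staller_wins_closed_nbhd_claimed:
  assumes "finite U" "v \<in> V - D" "closed_nbhd V E v \<subseteq> S"
  shows "staller_wins V E D S U st"
  using assms
proof (induction U arbitrary: S st rule: finite_psubset_induct)
  case (psubset U S st)
  show ?case
  proof (cases "U = {}")
    case True
    then show ?thesis using psubset.prems by (auto intro: staller_wins.fin)
  next
    case False
    then obtain u where u: "u \<in> U" by blast
    have after_move: "staller_wins V E D S' (U - {u'}) st'" if "S \<subseteq> S'" "u' \<in> U" for S' u' st'
      using psubset.prems that by (intro psubset.IH) auto
    show ?thesis
    proof (cases st)
      case True
      have "staller_wins V E D (insert u S) (U - {u}) False" using u by (intro after_move) auto
      then show ?thesis using True by (auto intro: staller_wins.stmove[OF u])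
    next
      case False
      have "\<forall>w\<in>U. staller_wins V E D S (U - {w}) True" using after_move by blast
      then show ?thesis using False \<open>U \<noteq> {}\<close> by (auto intro: staller_wins.dommove)
    qed
  qed
qed

lemma staller_wins_by_completing:
  assumes "finite U" "x \<in> U" "x \<in> V - D" "closed_nbhd V E x \<subseteq> insert x S"
  shows "staller_wins V E D S U True"
  using assms by (intro staller_wins.stmove[OF assms(2)] staller_wins_closed_nbhd_claimed) auto

text \<open>Staller claims \<open>u\<close>, after which only \<open>x\<close> is missing from the closed neighbourhood
  of \<open>x\<close>; Dominator is forced to claim \<open>x\<close>.\<close>

lemma staller_wins_by_forcing:
  assumes "finite U" "u \<in> U" "x \<in> U" "u \<noteq> x" "x \<in> V - D"
    and "closed_nbhd V E x \<subseteq> insert u (insert x S)"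
    and "staller_wins V E D (insert u S) (U - {u} - {x}) True"
  shows "staller_wins V E D S U True"
proof (rule staller_wins.stmove[OF assms(2)], rule staller_wins.dommove)
  show "U - {u} \<noteq> {}" using assms by auto
  show "\<forall>w\<in>U - {u}. staller_wins V E D (insert u S) (U - {u} - {w}) True"
  proof
    fix w assume w: "w \<in> U - {u}"
    show "staller_wins V E D (insert u S) (U - {u} - {w}) True"
    proof (cases "w = x")
      case True then show ?thesis using assms(7) by simp
    next
      case False
      then show ?thesis using assms w by (intro staller_wins_by_completing[of _ x]) auto
    qed
  qed
qed

text \<open>Dominator's
  moves outside the small game are answered as if he had played an arbitrary vertex inside.\<close>

lemma staller_wins_from_subgame:
  assumes "staller_wins V' E' D' S' U' st"
    and "\<forall>x\<in>V' - D'. x \<in> V - D \<and> closed_nbhd V E x \<subseteq> S \<union> closed_nbhd V' E' x"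
    and "U' \<subseteq> U" "S' \<subseteq> S" "finite U"
  shows "staller_wins V E D S U st"
  using assms
proof (induction arbitrary: S U rule: staller_wins.induct)
  case (fin U' v S' st)
  then have "closed_nbhd V E v \<subseteq> S" by blast
  then show ?case using fin by (intro staller_wins_closed_nbhd_claimed[of _ v]) auto
next
  case (stmove u U' S')
  have "staller_wins V E D (insert u S) (U - {u}) False"
    using stmove.prems by (intro stmove.IH) auto
  then show ?case using stmove by (auto intro: staller_wins.stmove)
next
  case (dommove U' S')
  obtain u0 where u0: "u0 \<in> U'" using dommove.hyps by blast
  have IH: "staller_wins V E D S U1 True" if "u \<in> U'" "U' - {u} \<subseteq> U1" "finite U1" for u U1
  proof -
    from dommove.IH that(1) have
      "\<And>S U. \<forall>x\<in>V' - D'. x \<in> V - D \<and> closed_nbhd V E x \<subseteq> S \<union> closed_nbhd V' E' x \<Longrightarrow>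
       U' - {u} \<subseteq> U \<Longrightarrow> S' \<subseteq> S \<Longrightarrow> finite U \<Longrightarrow> staller_wins V E D S U True"
      by blast
    from this[OF dommove.prems(1) that(2) dommove.prems(3) that(3)] show ?thesis .
  qed
  have "staller_wins V E D S (U - {w}) True" if "w \<in> U" for w
  proof (cases "w \<in> U'")
    case True
    then show ?thesis using dommove.prems by (intro IH[of w]) auto
  next
    case False
    then show ?thesis using dommove.prems u0 by (intro IH[of u0]) auto
  qed
  moreover have "U \<noteq> {}" using dommove.prems u0 by blast
  ultimately show ?case by (auto intro: staller_wins.dommove)
qed

text \<open>Vertices outside \<open>S \<union> U\<close> belong to Dominator. On Staller's turn every pair is
  untouched or already contains a Dominator vertex; on Dominator's turn the only exception is
  the pair whose unclaimed vertex \<open>w\<close> he takes next.\<close>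

definition pairing_inv :: "'a set set \<Rightarrow> bool \<Rightarrow> 'a set \<Rightarrow> 'a set \<Rightarrow> bool" where
  "pairing_inv P st S U \<longleftrightarrow> (if st then (\<forall>p\<in>P. p \<subseteq> U \<or> \<not> p \<subseteq> S \<union> U)
     else (\<exists>w. \<forall>p\<in>P. p \<subseteq> U \<or> \<not> p \<subseteq> S \<union> U \<or> (w \<in> p \<and> w \<in> U)))"

lemma pairing_inv_after_staller_move:
  assumes "\<forall>p\<in>P. card p = 2" "disjoint P" "u \<in> U" "pairing_inv P True S U"
  shows "pairing_inv P False (insert u S) (U - {u})"
proof -
  have inv: "\<forall>p\<in>P. p \<subseteq> U \<or> \<not> p \<subseteq> S \<union> U" using assms(4) by (simp add: pairing_inv_def)
  have SU: "S \<union> U = insert u S \<union> (U - {u})" using assms(3) by blast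
  show ?thesis
  proof (cases "\<exists>p0\<in>P. u \<in> p0 \<and> p0 \<subseteq> U")
    case True
    then obtain p0 where p0: "p0 \<in> P" "u \<in> p0" "p0 \<subseteq> U" by blast
    obtain a b where "p0 = {a, b}" "a \<noteq> b" using p0(1) assms(1) by (meson card_2_iff)
    then obtain w where w: "p0 = {u, w}" "w \<noteq> u" using p0(2) by blast
    have "p \<subseteq> U - {u} \<or> \<not> p \<subseteq> insert u S \<union> (U - {u}) \<or> (w \<in> p \<and> w \<in> U - {u})"
      if p: "p \<in> P" for p
    proof (cases "u \<in> p \<and> p \<subseteq> U")
      case True
      then have "p = p0" using p p0 assms(2) by (auto dest: disjointD)
      then show ?thesis using w p0(3) by blast
    next
      case False
      then show ?thesis using inv p SU by blast
    qed
    then show ?thesis unfolding pairing_inv_def by (simp only: if_False) blast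
  next
    case False
    then have "\<forall>p\<in>P. p \<subseteq> U - {u} \<or> \<not> p \<subseteq> insert u S \<union> (U - {u})"
      using inv SU by blast
    then show ?thesis unfolding pairing_inv_def by (simp only: if_False) blast
  qed
qed

lemma pairing_inv_dominator_reply:
  assumes "pairing_inv P False S U" "U \<noteq> {}" "S \<inter> U = {}"
  obtains u where "u \<in> U" "pairing_inv P True S (U - {u})"
proof -
  obtain w where w: "\<forall>p\<in>P. p \<subseteq> U \<or> \<not> p \<subseteq> S \<union> U \<or> (w \<in> p \<and> w \<in> U)"
    using assms(1) by (auto simp: pairing_inv_def)
  obtain u where u: "u \<in> U" "w \<in> U \<longrightarrow> u = w" using assms(2) by blast
  have "u \<notin> S" using u(1) assms(3) by blast
  then have "\<forall>p\<in>P. p \<subseteq> U - {u} \<or> \<not> p \<subseteq> S \<union> (U - {u})" using w u by blast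
  then show thesis using that u(1) by (simp add: pairing_inv_def)
qed

lemma not_staller_wins_if_pairing_inv:
  assumes "staller_wins V E D S U st"
    and "\<forall>p\<in>P. card p = 2" "disjoint P"
    and "\<forall>v\<in>V - D. \<exists>p\<in>P. p \<subseteq> closed_nbhd V E v"
    and "S \<inter> U = {}" "pairing_inv P st S U"
  shows False
  using assms
proof (induction rule: staller_wins.induct)
  case (fin U v S st)
  obtain p where p: "p \<in> P" "p \<subseteq> S" "p \<noteq> {}"
    using fin.hyps(2,3) fin.prems(1,3) by (metis card.empty subset_trans zero_neq_numeral)
  have "\<forall>p\<in>P. p \<subseteq> U \<or> \<not> p \<subseteq> S \<union> U \<or> (\<exists>w. w \<in> p \<and> w \<in> U)"
    using fin.prems(5) by (cases st) (auto simp: pairing_inv_def)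
  then show False using p fin.hyps(1) by blast
next
  case (stmove u U S)
  have "pairing_inv P False (insert u S) (U - {u})"
    using pairing_inv_after_staller_move[OF stmove.prems(1,2) stmove.hyps(1) stmove.prems(5)] .
  moreover have "insert u S \<inter> (U - {u}) = {}" using stmove.prems(4) by blast
  ultimately show ?case using stmove.IH stmove.prems(1,2,3) by blast
next
  case (dommove U S)
  obtain u where u: "u \<in> U" "pairing_inv P True S (U - {u})"
    using pairing_inv_dominator_reply[OF dommove.prems(5) dommove.hyps(1) dommove.prems(4)] .
  moreover have "S \<inter> (U - {u}) = {}" using dommove.prems(4) by blast
  ultimately show ?case
    using dommove.IH[rule_format, OF u(1), THEN conjunct2, rule_format] dommove.prems(1,2,3) by blast
qed

text \<open>Pairing strategy: whenever Staller claims a vertex of a pair, Dominator claims its partner.\<close>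

lemma dominator_wins_by_pairing:
  assumes "\<forall>p\<in>P. card p = 2" "disjoint P"
    and "\<forall>v\<in>V - D. \<exists>p\<in>P. p \<subseteq> closed_nbhd V E v"
  shows "dominator_wins_MBD V E D"
proof -
  have "pairing_inv P True {} V" by (simp add: pairing_inv_def)
  then show ?thesis using not_staller_wins_if_pairing_inv[OF _ assms, of "{}" V True]
    unfolding dominator_wins_MBD_def staller_wins_MBD_def by blast
qed

definition pairing_avoiding :: "'a set set \<Rightarrow> 'a set \<Rightarrow> 'a \<Rightarrow> 'a set set \<Rightarrow> bool" where
  "pairing_avoiding E A v P \<longleftrightarrow> P \<subseteq> E \<and> disjoint P \<and> v \<notin> \<Union> P \<and> A - {v} \<subseteq> \<Union> P"

lemma dominator_wins_by_edge_pairing: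
  assumes "wf_graph V E" "pairing_avoiding E A v P" "V - D \<subseteq> A - {v}"
  shows "dominator_wins_MBD V E D"
proof (rule dominator_wins_by_pairing)
  have P: "P \<subseteq> E" "disjoint P" "A - {v} \<subseteq> \<Union> P" using assms(2) unfolding pairing_avoiding_def by auto
  show "\<forall>q\<in>P. card q = 2"
  proof
    fix q assume "q \<in> P"
    then obtain a b where "q = {a, b}" "a \<noteq> b" using P(1) wf_graph_edgeD[OF assms(1)] by blast
    then show "card q = 2" by simp
  qed
  show "disjoint P" by (rule P(2))
  show "\<forall>u\<in>V - D. \<exists>q\<in>P. q \<subseteq> closed_nbhd V E u"
  proof
    fix u assume "u \<in> V - D"
    then obtain q where "q \<in> P" "u \<in> q" using P(3) assms(3) by blast
    then show "\<exists>q\<in>P. q \<subseteq> closed_nbhd V E u"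
      using edge_subset_closed_nbhd[OF assms(1)] P(1) by blast
  qed
qed

section \<open>Forcing moves along walks\<close>

lemma closed_nbhd_even_position:
  assumes "distinct W" "\<mu> \<notin> set W" "2 * i < length W"
    and "closed_nbhd V E (W ! (2 * i)) \<subseteq> insert (W ! (2 * i)) {b. {W ! (2 * i), b} \<in> path_edges (closed_walk \<mu> W)}"
  shows "closed_nbhd V E (W ! (2 * i)) \<subseteq>
    {\<mu>, W ! (2 * i)} \<union> (\<lambda>j. W ! (2 * j + 1)) ` {j. j \<le> i \<and> 2 * j + 1 < length W}"
proof
  let ?Y = "(\<lambda>j. W ! (2 * j + 1)) ` {j. j \<le> i \<and> 2 * j + 1 < length W}"
  fix b assume "b \<in> closed_nbhd V E (W ! (2 * i))"
  then have "b = W ! (2 * i) \<or> {W ! (2 * i), b} \<in> path_edges (closed_walk \<mu> W)"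
    using assms(4) by blast
  then have "b = W ! (2 * i) \<or> b = \<mu> \<or> (0 < 2 * i \<and> b = W ! (2 * i - 1))
      \<or> (Suc (2 * i) < length W \<and> b = W ! Suc (2 * i))"
    using closed_walk_neighbour[OF assms(1-3), of b] by blast
  moreover have "W ! (2 * i - 1) \<in> ?Y" if "0 < 2 * i"
  proof -
    have "2 * i - 1 = 2 * (i - 1) + 1" using that by simp
    then show ?thesis using assms(3) by (intro image_eqI[of _ _ "i - 1"]) auto
  qed
  moreover have "W ! Suc (2 * i) \<in> ?Y" if "Suc (2 * i) < length W"
    using that by (intro image_eqI[of _ _ i]) auto
  ultimately show "b \<in> {\<mu>, W ! (2 * i)} \<union> ?Y" by blast
qed

text \<open>With \<open>\<mu>\<close> claimed, Staller claims \<open>W ! 1, W ! 3, \<dots>\<close> in turn; each claim leaves only the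
  preceding even-position vertex missing from its closed neighbourhood, so Dominator is forced
  to take it.\<close>

lemma staller_wins_forcing_chain:
  assumes "finite U" "\<mu> \<in> S" "distinct W" "\<mu> \<notin> set W" "2 * i < length W"
    and "set (take (2 * i) W) \<subseteq> U"
    and "\<forall>j<i. W ! (2 * j) \<in> V - D \<and>
      closed_nbhd V E (W ! (2 * j)) \<subseteq> insert (W ! (2 * j)) {b. {W ! (2 * j), b} \<in> path_edges (closed_walk \<mu> W)}"
    and "staller_wins V E D (S \<union> (\<lambda>j. W ! (2 * j + 1)) ` {..<i}) (U - set (take (2 * i) W)) True"
  shows "staller_wins V E D S U True"
  using assms
proof (induction i)
  case (Suc i)
  let ?Y = "(\<lambda>j. W ! (2 * j + 1)) ` {..<i}"
  let ?u = "W ! (2 * i + 1)" and ?x = "W ! (2 * i)" and ?U = "U - set (take (2 * i) W)"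
  have len: "2 * i + 1 < length W" using Suc.prems(5) by simp
  have take: "take (2 * Suc i) W = take (2 * i) W @ [?x, ?u]"
    using len by (simp add: take_Suc_conv_app_nth numeral_2_eq_2)
  have "?u \<noteq> ?x" using Suc.prems(3) len by (simp add: nth_eq_iff_index_eq)
  moreover have "?u \<in> ?U" "?x \<in> ?U"
    using Suc.prems(3,6) len take nth_notin_set_take[OF Suc.prems(3)] by auto
  moreover have "{j. j \<le> i \<and> 2 * j + 1 < length W} = insert i {..<i}" using len by auto
  then have "closed_nbhd V E ?x \<subseteq> insert ?u (insert ?x (S \<union> ?Y))"
    using closed_nbhd_even_position[OF Suc.prems(3,4), of i V E] Suc.prems(2,5,7) by auto
  moreover have "staller_wins V E D (insert ?u (S \<union> ?Y)) (?U - {?u} - {?x}) True"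
  proof -
    have "insert ?u (S \<union> ?Y) = S \<union> (\<lambda>j. W ! (2 * j + 1)) ` {..<Suc i}" by (auto simp: lessThan_Suc)
    moreover have "?U - {?u} - {?x} = U - set (take (2 * Suc i) W)" using take by auto
    ultimately show ?thesis using Suc.prems(8) by simp
  qed
  ultimately have "staller_wins V E D (S \<union> ?Y) ?U True"
    using Suc.prems(1,7) by (intro staller_wins_by_forcing[of ?U ?u ?x]) auto
  then show ?case using Suc.IH Suc.prems(1-4,6,7) len take by auto
qed simp

lemma staller_wins_along_walk:
  assumes "finite U" "\<mu> \<in> S" "distinct W" "\<mu> \<notin> set W" "length W = 2 * k + 1" "set W \<subseteq> U"
    and "\<forall>j\<le>k. W ! (2 * j) \<in> V - D \<and>
      closed_nbhd V E (W ! (2 * j)) \<subseteq> insert (W ! (2 * j)) {b. {W ! (2 * j), b} \<in> path_edges (closed_walk \<mu> W)}"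
  shows "staller_wins V E D S U True"
proof (rule staller_wins_forcing_chain[of U \<mu> S W k])
  let ?Y = "(\<lambda>j. W ! (2 * j + 1)) ` {..<k}"
  let ?x = "W ! (2 * k)"
  show "set (take (2 * k) W) \<subseteq> U" using assms(6) set_take_subset by fast
  have "{j. j \<le> k \<and> 2 * j + 1 < length W} = {..<k}" using assms(5) by auto
  then have "closed_nbhd V E ?x \<subseteq> insert ?x (S \<union> ?Y)"
    using closed_nbhd_even_position[OF assms(3,4), of k V E] assms(2,5,7) by auto
  moreover have "?x \<in> U - set (take (2 * k) W)"
    using assms(3,5,6) nth_notin_set_take[OF assms(3), of "2 * k" "2 * k"] nth_mem[of "2 * k" W] by auto
  ultimately show "staller_wins V E D (S \<union> ?Y) (U - set (take (2 * k) W)) True"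
    using assms(1,7) by (intro staller_wins_by_completing) auto
qed (use assms in auto)

text \<open>Forcing chains run from both ends of the walk towards the position \<open>2 * i\<close>, whose
  vertex is left to the continuation.\<close>

lemma staller_wins_forcing_to_position:
  assumes "finite U" "\<mu> \<in> S" "distinct W" "\<mu> \<notin> set W" "length W = 2 * k + 1" "i \<le> k"
    and "set W - {W ! (2 * i)} \<subseteq> U"
    and "\<forall>j\<le>k. j \<noteq> i \<longrightarrow> W ! (2 * j) \<in> V - D \<and>
      closed_nbhd V E (W ! (2 * j)) \<subseteq> insert (W ! (2 * j)) {b. {W ! (2 * j), b} \<in> path_edges (closed_walk \<mu> W)}"
    and "staller_wins V E D (S \<union> odd_positions W) (U - (set W - {W ! (2 * i)})) True"
  shows "staller_wins V E D S U True"
proof (rule staller_wins_forcing_chain[of U \<mu> S W i])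
  let ?S = "S \<union> (\<lambda>j. W ! (2 * j + 1)) ` {..<i}" and ?U = "U - set (take (2 * i) W)"
  have "length W - 2 * (k - i) = Suc (2 * i)" using assms(5,6) by simp
  then have right: "set (take (2 * (k - i)) (rev W)) = set (drop (Suc (2 * i)) W)" by (simp add: take_rev)
  have disj: "set (take (2 * i) W) \<inter> set (drop (Suc (2 * i)) W) = {}"
    using set_take_disj_set_drop_if_distinct[OF assms(3), of "2 * i" "Suc (2 * i)"] by simp
  have parts: "set (take (2 * i) W) \<union> set (take (2 * (k - i)) (rev W)) = set W - {W ! (2 * i)}"
    using set_take_Un_set_drop_Suc[OF assms(3), of "2 * i"] assms(5,6) right by simp
  have U: "?U - set (take (2 * (k - i)) (rev W)) = U - (set W - {W ! (2 * i)})"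
    unfolding parts[symmetric] by blast
  show "staller_wins V E D ?S ?U True"
  proof (rule staller_wins_forcing_chain[of ?U \<mu> ?S "rev W" "k - i"])
    show "set (take (2 * (k - i)) (rev W)) \<subseteq> ?U"
      unfolding right using disj parts[unfolded right] assms(7) by blast
    show "\<forall>j<k - i. rev W ! (2 * j) \<in> V - D \<and> closed_nbhd V E (rev W ! (2 * j))
      \<subseteq> insert (rev W ! (2 * j)) {b. {rev W ! (2 * j), b} \<in> path_edges (closed_walk \<mu> (rev W))}"
    proof (intro allI impI)
      fix j assume "j < k - i"
      then have "rev W ! (2 * j) = W ! (2 * (k - j))" "k - j \<le> k" "k - j \<noteq> i"
        using assms(5) by (auto simp: rev_nth algebra_simps)
      then show "rev W ! (2 * j) \<in> V - D \<and> closed_nbhd V E (rev W ! (2 * j))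
        \<subseteq> insert (rev W ! (2 * j)) {b. {rev W ! (2 * j), b} \<in> path_edges (closed_walk \<mu> (rev W))}"
        using assms(8) unfolding path_edges_closed_walk_rev by simp
    qed
    show "staller_wins V E D (?S \<union> (\<lambda>j. rev W ! (2 * j + 1)) ` {..<k - i})
      (?U - set (take (2 * (k - i)) (rev W))) True"
      using assms(9) unfolding U odd_positions_split[OF assms(5,6)] by (simp add: Un_assoc)
  qed (use assms in auto)
  show "set (take (2 * i) W) \<subseteq> U" using assms(7) parts by blast
  show "\<forall>j<i. W ! (2 * j) \<in> V - D \<and> closed_nbhd V E (W ! (2 * j))
    \<subseteq> insert (W ! (2 * j)) {b. {W ! (2 * j), b} \<in> path_edges (closed_walk \<mu> W)}"
    using assms(6,8) by simp
qed (use assms(1-6) in auto)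

section \<open>Gadget decompositions of F-cacti\<close>

text \<open>An F-cactus, described through the tree \<open>T = (XF, ET)\<close> it comes from: \<open>m e\<close> is the
  subdivision vertex of the tree edge \<open>e\<close>, and for each end \<open>x\<close> of \<open>e\<close> the edge \<open>{x, m e}\<close>
  of \<open>S(T)\<close> has become the closed walk \<open>m e, W x e, m e\<close>. This is the edge itself when
  \<open>W x e = [x]\<close> and otherwise an even cycle through \<open>m e\<close> and \<open>x\<close>, the union of two odd
  \<open>x, m e\<close>-paths.\<close>

locale cactus_decomposition =
  fixes XF :: "'a set" and ET :: "'a set set" and m :: "'a set \<Rightarrow> 'a"
    and W :: "'a \<Rightarrow> 'a set \<Rightarrow> 'a list" and V :: "'a set" and E :: "'a set set"
  assumes tree: "is_tree XF ET"
    and inj_m: "inj_on m ET"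
    and m_notin_XF: "e \<in> ET \<Longrightarrow> m e \<notin> XF"
    and distinct_W: "e \<in> ET \<Longrightarrow> x \<in> e \<Longrightarrow> distinct (W x e)"
    and odd_length_W: "e \<in> ET \<Longrightarrow> x \<in> e \<Longrightarrow> odd (length (W x e))"
    and W_even_position: "e \<in> ET \<Longrightarrow> x \<in> e \<Longrightarrow> \<exists>i. 2 * i < length (W x e) \<and> W x e ! (2 * i) = x"
    and W_Int_skeleton: "e \<in> ET \<Longrightarrow> x \<in> e \<Longrightarrow> set (W x e) \<inter> (XF \<union> m ` ET) = {x}"
    and W_disjoint: "\<lbrakk>e \<in> ET; x \<in> e; e' \<in> ET; x' \<in> e'; (x, e) \<noteq> (x', e')\<rbrakk>
      \<Longrightarrow> (set (W x e) - {x}) \<inter> set (W x' e') = {}"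
    and vertices: "V = XF \<union> m ` ET \<union> (\<Union>e\<in>ET. \<Union>x\<in>e. set (W x e))"
    and edges: "E = (\<Union>e\<in>ET. \<Union>x\<in>e. path_edges (closed_walk (m e) (W x e)))"
begin

lemma end_in_XF: "e \<in> ET \<Longrightarrow> x \<in> e \<Longrightarrow> x \<in> XF"
  using wf_graph_edgeD[of XF ET e] tree unfolding is_tree_def by blast

lemma end_in_W: "e \<in> ET \<Longrightarrow> x \<in> e \<Longrightarrow> x \<in> set (W x e)"
  using W_Int_skeleton by blast

lemma m_notin_W: "e \<in> ET \<Longrightarrow> x \<in> e \<Longrightarrow> m e \<notin> set (W x e)"
  using W_Int_skeleton m_notin_XF end_in_XF by blast

lemma tree_vertex_in_W:
  assumes "e \<in> ET" "x \<in> e" "e' \<in> ET" "x' \<in> e'" "x \<in> set (W x' e')"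
  shows "x' = x"
proof -
  have "x \<in> set (W x' e') \<inter> (XF \<union> m ` ET)" using end_in_XF[OF assms(1,2)] assms(5) by blast
  then show ?thesis by (simp add: W_Int_skeleton[OF assms(3,4)])
qed

lemma closed_walk_subset_V: "e \<in> ET \<Longrightarrow> x \<in> e \<Longrightarrow> set (closed_walk (m e) (W x e)) \<subseteq> V"
  using vertices by auto

lemma closed_walk_edges_subset_E: "e \<in> ET \<Longrightarrow> x \<in> e \<Longrightarrow> path_edges (closed_walk (m e) (W x e)) \<subseteq> E"
  using edges by blast

lemma wf_graph_V_E: "wf_graph V E"
  unfolding wf_graph_def
proof (intro conjI ballI)
  have "finite XF" "ET \<subseteq> Pow XF" "\<forall>e\<in>ET. finite e"
    using tree wf_graph_edgeD[of XF ET] unfolding is_tree_def wf_graph_def by blast+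
  then show "finite V" using vertices finite_subset by (simp add: finite_subset)
  fix q assume "q \<in> E"
  then obtain e x where ex: "e \<in> ET" "x \<in> e" "q \<in> path_edges (closed_walk (m e) (W x e))"
    using edges by blast
  have ne: "W x e \<noteq> []" using odd_length_W[OF ex(1,2)] by auto
  have "\<exists>a b. q = {a, b} \<and> a \<noteq> b"
  proof (cases "q \<in> path_edges (W x e)")
    case True
    then show ?thesis using path_edges_distinct[OF distinct_W[OF ex(1,2)]] by blast
  next
    case False
    then have "q = {m e, hd (W x e)} \<or> q = {last (W x e), m e}"
      using ex(3) path_edges_closed_walk[OF ne] by blast
    moreover have "hd (W x e) \<noteq> m e" "last (W x e) \<noteq> m e"
      using m_notin_W[OF ex(1,2)] ne hd_in_set last_in_set by metis+
    ultimately show ?thesis by metis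
  qed
  moreover have "q \<subseteq> V"
    using path_edges_subset_set[OF ex(3)] closed_walk_subset_V[OF ex(1,2)] by blast
  ultimately show "\<exists>a b. q = {a, b} \<and> a \<noteq> b \<and> a \<in> V \<and> b \<in> V" by blast
qed

text \<open>Apart from the possibly shared end \<open>x\<close>, a vertex of \<open>W x e\<close> lies on no other closed walk.\<close>

lemma edge_at_W_vertex:
  assumes "e \<in> ET" "x \<in> e" "z \<in> set (W x e)" "z = x \<longrightarrow> (\<forall>e'\<in>ET. x \<in> e' \<longrightarrow> e' = e)"
    and "{z, b} \<in> E"
  shows "{z, b} \<in> path_edges (closed_walk (m e) (W x e))"
proof -
  obtain e' x' where ex': "e' \<in> ET" "x' \<in> e'" "{z, b} \<in> path_edges (closed_walk (m e') (W x' e'))"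
    using assms(5) edges by blast
  have "z \<noteq> m e'"
  proof
    assume "z = m e'"
    then have "z = x" using W_Int_skeleton[OF assms(1,2)] assms(3) ex'(1) by blast
    then show False using \<open>z = m e'\<close> end_in_XF[OF assms(1,2)] m_notin_XF[OF ex'(1)] by simp
  qed
  then have z: "z \<in> set (W x' e')" using path_edges_subset_set[OF ex'(3)] by auto
  have "(x, e) = (x', e')"
  proof (rule ccontr)
    assume ne: "(x, e) \<noteq> (x', e')"
    show False
    proof (cases "z = x")
      case False
      then show False using W_disjoint[OF assms(1,2) ex'(1,2) ne] assms(3) z by blast
    next
      case True
      then have "x' = x" using tree_vertex_in_W[OF assms(1,2) ex'(1,2)] z by simp
      then show False using assms(4) True ex'(1,2) ne by blast
    qed
  qed
  then show ?thesis using ex'(3) by simp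
qed

lemma closed_nbhd_W_vertex:
  assumes "e \<in> ET" "x \<in> e" "z \<in> set (W x e)" "z = x \<longrightarrow> (\<forall>e'\<in>ET. x \<in> e' \<longrightarrow> e' = e)"
  shows "closed_nbhd V E z \<subseteq> insert z {b. {z, b} \<in> path_edges (closed_walk (m e) (W x e))}"
  using edge_at_W_vertex[OF assms] unfolding closed_nbhd_def by (auto simp: insert_commute)

lemma walk_pairs_W:
  assumes "e \<in> ET" "x \<in> e"
  shows "walk_pairs (m e) (W x e) \<subseteq> E" "disjoint (walk_pairs (m e) (W x e))"
    "\<Union> (walk_pairs (m e) (W x e)) = insert (m e) (set (W x e))"
  using walk_pairs_subset[of "m e" "W x e"] closed_walk_edges_subset_E[OF assms]
    disjoint_walk_pairs[OF distinct_W[OF assms] m_notin_W[OF assms]]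
    Union_walk_pairs[OF odd_length_W[OF assms]] by blast+

lemma walk_pairs_avoiding_W:
  assumes "e \<in> ET" "x \<in> e" "2 * i < length (W x e)"
  shows "walk_pairs_avoiding (W x e) i \<subseteq> E" "disjoint (walk_pairs_avoiding (W x e) i)"
    "\<Union> (walk_pairs_avoiding (W x e) i) = set (W x e) - {W x e ! (2 * i)}"
  using walk_pairs_avoiding_subset[of "W x e" i "m e"] closed_walk_edges_subset_E[OF assms(1,2)]
    disjoint_walk_pairs_avoiding[OF distinct_W[OF assms(1,2)]]
    Union_walk_pairs_avoiding[OF distinct_W[OF assms(1,2)] odd_length_W[OF assms(1,2)] assms(3)] by blast+

end

locale bipartite_cactus_decomposition = cactus_decomposition +
  fixes X :: "'a set"
  assumes one_end_in_X: "\<forall>q\<in>E. card (q \<inter> X) = 1"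
    and XF_subset_X: "XF \<subseteq> X"
begin

lemma edge_in_X_iff:
  assumes "{a, b} \<in> E" "a \<noteq> b"
  shows "a \<in> X \<longleftrightarrow> b \<notin> X"
proof -
  have "card ({a, b} \<inter> X) = 1" using one_end_in_X assms(1) by blast
  then show ?thesis using assms(2) by (cases "a \<in> X"; cases "b \<in> X") (auto simp: Int_insert_left)
qed

lemma W_nth_in_X_iff:
  assumes "e \<in> ET" "x \<in> e" "j < length (W x e)"
  shows "W x e ! j \<in> X \<longleftrightarrow> even j"
proof -
  let ?W = "W x e"
  have step: "?W ! j \<in> X \<longleftrightarrow> ?W ! Suc j \<notin> X" if "Suc j < length ?W" for j
  proof (rule edge_in_X_iff)
    have "{?W ! j, ?W ! Suc j} \<in> path_edges ?W" unfolding mem_path_edges_iff using that by auto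
    then show "{?W ! j, ?W ! Suc j} \<in> E"
      using path_edges_subset_closed_walk[of ?W "m e"] closed_walk_edges_subset_E[OF assms(1,2)] by blast
    show "?W ! j \<noteq> ?W ! Suc j" using distinct_W[OF assms(1,2)] that by (simp add: nth_eq_iff_index_eq)
  qed
  have alternate: "j < length ?W \<Longrightarrow> ?W ! j \<in> X \<longleftrightarrow> (?W ! 0 \<in> X \<longleftrightarrow> even j)" for j
    by (induction j) (use step in auto)
  obtain i where i: "2 * i < length ?W" "?W ! (2 * i) = x" using W_even_position[OF assms(1,2)] by blast
  have "x \<in> X" using XF_subset_X end_in_XF[OF assms(1,2)] by blast
  then have "?W ! 0 \<in> X" using alternate[OF i(1)] i(2) by simp
  then show ?thesis using alternate[OF assms(3)] by simp
qed

lemma m_notin_X: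
  assumes "e \<in> ET" "x \<in> e"
  shows "m e \<notin> X"
proof -
  have ne: "W x e \<noteq> []" using odd_length_W[OF assms] by auto
  then have "{m e, hd (W x e)} \<in> E"
    using path_edges_closed_walk[OF ne] closed_walk_edges_subset_E[OF assms] by blast
  moreover have "hd (W x e) \<in> X" using W_nth_in_X_iff[OF assms, of 0] ne by (simp add: hd_conv_nth)
  moreover have "m e \<noteq> hd (W x e)" using m_notin_W[OF assms] ne hd_in_set by metis
  ultimately show ?thesis using edge_in_X_iff by blast
qed

lemma even_position_undominated:
  assumes "e \<in> ET" "x \<in> e" "2 * j < length (W x e)"
    and "W x e ! (2 * j) = x \<longrightarrow> (\<forall>e'\<in>ET. x \<in> e' \<longrightarrow> e' = e)"
  shows "W x e ! (2 * j) \<in> V - (V - X) \<and> closed_nbhd V E (W x e ! (2 * j))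
    \<subseteq> insert (W x e ! (2 * j)) {b. {W x e ! (2 * j), b} \<in> path_edges (closed_walk (m e) (W x e))}"
proof
  have "W x e ! (2 * j) \<in> set (W x e)" using assms(3) by simp
  then show "W x e ! (2 * j) \<in> V - (V - X)"
    using W_nth_in_X_iff[OF assms(1-3)] closed_walk_subset_V[OF assms(1,2)] by auto
  show "closed_nbhd V E (W x e ! (2 * j))
    \<subseteq> insert (W x e ! (2 * j)) {b. {W x e ! (2 * j), b} \<in> path_edges (closed_walk (m e) (W x e))}"
    using closed_nbhd_W_vertex[OF assms(1,2) \<open>W x e ! (2 * j) \<in> set (W x e)\<close> assms(4)] .
qed

lemma staller_wins_single_vertex:
  assumes "card XF \<le> 1"
  shows "staller_wins V E (V - X) {} V True"
proof -
  have "finite XF" "XF \<noteq> {}" using tree unfolding is_tree_def wf_graph_def by auto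
  then have "card XF = 1" using assms by (simp add: Suc_leI card_gt_0_iff le_antisym)
  then obtain x where x: "XF = {x}" by (rule card_1_singletonE)
  have "ET = {}" by (rule tree_single_vertex_no_edges[OF tree \<open>card XF = 1\<close>])
  then have "V = {x}" "E = {}" using vertices edges x by simp_all
  moreover have "x \<in> X" using XF_subset_X x by blast
  ultimately show ?thesis by (intro staller_wins_by_completing[of _ x]) (auto simp: closed_nbhd_def)
qed

lemma pairing_single_vertex:
  assumes "card XF \<le> 1" "v \<in> V"
  shows "pairing_avoiding E (V \<inter> X) v {}"
proof -
  have "finite XF" "XF \<noteq> {}" using tree unfolding is_tree_def wf_graph_def by auto
  then have "card XF = 1" using assms by (simp add: Suc_leI card_gt_0_iff le_antisym)
  then obtain x where x: "XF = {x}" by (rule card_1_singletonE)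
  have "ET = {}" by (rule tree_single_vertex_no_edges[OF tree \<open>card XF = 1\<close>])
  then have "V = {x}" using vertices x by simp
  then show ?thesis using assms(2) unfolding pairing_avoiding_def by auto
qed

end

locale cactus_leaf = bipartite_cactus_decomposition +
  fixes l p :: 'a
  assumes leaf_edge: "{l, p} \<in> ET" and leaf_ne: "l \<noteq> p"
    and leaf_unique: "\<And>e. e \<in> ET \<Longrightarrow> l \<in> e \<Longrightarrow> e = {l, p}"
begin

abbreviation \<mu> :: 'a where "\<mu> \<equiv> m {l, p}"
abbreviation Wl :: "'a list" where "Wl \<equiv> W l {l, p}"
abbreviation Wp :: "'a list" where "Wp \<equiv> W p {l, p}"

text \<open>The cactus of the tree \<open>T - l\<close>: the gadgets of the edge \<open>{l, p}\<close> are removed, except for \<open>p\<close>.\<close>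

definition reduced_V :: "'a set" where
  "reduced_V = (XF - {l}) \<union> m ` (ET - {{l, p}}) \<union> (\<Union>e\<in>ET - {{l, p}}. \<Union>x\<in>e. set (W x e))"

definition reduced_E :: "'a set set" where
  "reduced_E = (\<Union>e\<in>ET - {{l, p}}. \<Union>x\<in>e. path_edges (closed_walk (m e) (W x e)))"

lemmas l_in_leaf_edge = insertI1[of l "{p}"]
lemmas p_in_leaf_edge = insertI2[OF singletonI, where a = p and b = l]

lemma reduced: "bipartite_cactus_decomposition (XF - {l}) (ET - {{l, p}}) m W reduced_V reduced_E X"
proof unfold_locales
  show "is_tree (XF - {l}) (ET - {{l, p}})"
    using is_tree_remove_leaf[OF tree leaf_edge leaf_ne] leaf_unique by blast
  show "inj_on m (ET - {{l, p}})" using inj_m inj_on_subset by blast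
  show "\<forall>q\<in>reduced_E. card (q \<inter> X) = 1" using one_end_in_X edges unfolding reduced_E_def by blast
  fix e x assume ex: "e \<in> ET - {{l, p}}" "x \<in> e"
  then have "x \<noteq> l" using leaf_unique by blast
  then show "set (W x e) \<inter> (XF - {l} \<union> m ` (ET - {{l, p}})) = {x}"
    using W_Int_skeleton[of e x] end_in_XF[of e x] end_in_W[of e x] ex by blast
qed (use m_notin_XF distinct_W odd_length_W W_even_position W_disjoint XF_subset_X
  in \<open>auto simp: reduced_V_def reduced_E_def\<close>)

lemma card_XF_reduced_less: "card (XF - {l}) < card XF"
  using card_Diff1_less[of XF l] end_in_XF[OF leaf_edge l_in_leaf_edge] tree
  unfolding is_tree_def wf_graph_def by blast

lemma reduced_V_subset: "reduced_V \<subseteq> V"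
  unfolding reduced_V_def using vertices by blast

lemma reduced_E_subset: "reduced_E \<subseteq> E"
  unfolding reduced_E_def using edges by blast

lemma p_in_reduced_V: "p \<in> reduced_V"
  unfolding reduced_V_def using end_in_XF[OF leaf_edge p_in_leaf_edge] leaf_ne by blast

lemma mu_notin_reduced_V: "\<mu> \<notin> reduced_V"
proof
  assume a: "\<mu> \<in> reduced_V"
  have "\<mu> \<notin> XF" using m_notin_XF[OF leaf_edge] .
  moreover have "\<mu> \<notin> m ` (ET - {{l, p}})" using inj_m leaf_edge by (auto simp: inj_on_def)
  moreover have "\<mu> \<notin> set (W x e)" if "e \<in> ET" "x \<in> e" for e x
    using W_Int_skeleton[OF that] end_in_XF[OF that] leaf_edge \<open>\<mu> \<notin> XF\<close> by blast
  ultimately show False using a unfolding reduced_V_def by blast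
qed

lemma Wl_Int_reduced_V: "set Wl \<inter> reduced_V = {}"
proof (rule equals0I)
  fix z assume z: "z \<in> set Wl \<inter> reduced_V"
  have skeleton: "set Wl \<inter> (XF \<union> m ` ET) = {l}" by (rule W_Int_skeleton[OF leaf_edge l_in_leaf_edge])
  consider "z \<in> XF - {l}" | "z \<in> m ` (ET - {{l, p}})"
    | e x where "e \<in> ET - {{l, p}}" "x \<in> e" "z \<in> set (W x e)"
    using z unfolding reduced_V_def by blast
  then show False
  proof cases
    case 1 then show False using skeleton z by blast
  next
    case 2
    then have "z = l" using skeleton z by blast
    then show False using 2 m_notin_XF end_in_XF[OF leaf_edge l_in_leaf_edge] by blast
  next
    case 3
    show False
    proof (cases "z = l")
      case True
      then have "x = l" using tree_vertex_in_W[OF leaf_edge l_in_leaf_edge, of e x] 3 by blast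
      then show False using leaf_unique 3 by blast
    next
      case False
      have "(l, {l, p}) \<noteq> (x, e)" using 3 by auto
      then show False using W_disjoint[OF leaf_edge l_in_leaf_edge, of e x] 3 z False by blast
    qed
  qed
qed

lemma Wp_Int_reduced_V: "set Wp \<inter> reduced_V \<subseteq> {p}"
proof
  fix z assume z: "z \<in> set Wp \<inter> reduced_V"
  have skeleton: "set Wp \<inter> (XF \<union> m ` ET) = {p}" by (rule W_Int_skeleton[OF leaf_edge p_in_leaf_edge])
  consider "z \<in> XF \<union> m ` ET" | e x where "e \<in> ET - {{l, p}}" "x \<in> e" "z \<in> set (W x e)"
    using z unfolding reduced_V_def by blast
  then show "z \<in> {p}"
  proof cases
    case 1 then show ?thesis using skeleton z by blast
  next
    case 2
    have "(p, {l, p}) \<noteq> (x, e)" using 2 by auto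
    then show ?thesis using W_disjoint[OF leaf_edge p_in_leaf_edge, of e x] 2 z by blast
  qed
qed

lemma Wl_Wp_disjoint: "set Wl \<inter> set Wp = {}"
proof -
  have "(set Wl - {l}) \<inter> set Wp = {}"
    using W_disjoint[OF leaf_edge l_in_leaf_edge leaf_edge p_in_leaf_edge] leaf_ne by simp
  moreover have "l \<notin> set Wp"
    using tree_vertex_in_W[OF leaf_edge l_in_leaf_edge leaf_edge p_in_leaf_edge] leaf_ne by blast
  ultimately show ?thesis by blast
qed

lemma V_subset_reduced_V: "V \<subseteq> reduced_V \<union> {\<mu>} \<union> set Wl \<union> set Wp"
proof
  fix v assume "v \<in> V"
  then consider "v \<in> XF" | "v \<in> m ` ET" | e x where "e \<in> ET" "x \<in> e" "v \<in> set (W x e)"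
    using vertices by blast
  then show "v \<in> reduced_V \<union> {\<mu>} \<union> set Wl \<union> set Wp"
  proof cases
    case 1
    then show ?thesis using end_in_W[OF leaf_edge l_in_leaf_edge] unfolding reduced_V_def
      by (cases "v = l") auto
  next
    case 2 then show ?thesis unfolding reduced_V_def by (cases "v = \<mu>") auto
  next
    case 3 then show ?thesis unfolding reduced_V_def by (cases "e = {l, p}") auto
  qed
qed

lemma edge_at_reduced_V:
  assumes "w \<in> reduced_V" "{w, b} \<in> E"
  shows "{w, b} \<in> reduced_E \<or> (w = p \<and> {p, b} \<in> path_edges (closed_walk \<mu> Wp))"
proof -
  obtain e x where ex: "e \<in> ET" "x \<in> e" "{w, b} \<in> path_edges (closed_walk (m e) (W x e))"
    using assms(2) edges by blast
  show ?thesis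
  proof (cases "e = {l, p}")
    case False
    then show ?thesis using ex unfolding reduced_E_def by blast
  next
    case True
    have "w \<in> set (closed_walk (m e) (W x e))" using path_edges_subset_set[OF ex(3)] by blast
    then have wW: "w \<in> set (W x e)" using mu_notin_reduced_V assms(1) True by auto
    have "x = p" using ex(2) wW Wl_Int_reduced_V assms(1) True by blast
    then have "w = p" using wW Wp_Int_reduced_V assms(1) True by blast
    then show ?thesis using ex(3) True \<open>x = p\<close> by simp
  qed
qed

lemma staller_wins_along_Wl:
  assumes "w \<notin> set Wl"
  shows "staller_wins V E (V - X) {\<mu>} (V - {\<mu>} - {w}) True"
proof -
  obtain k where k: "length Wl = 2 * k + 1" using odd_length_W[OF leaf_edge l_in_leaf_edge] by (blast elim: oddE)
  show ?thesis
  proof (rule staller_wins_along_walk[of _ \<mu> _ Wl k])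
    show "finite (V - {\<mu>} - {w})" using wf_graph_V_E unfolding wf_graph_def by simp
    show "set Wl \<subseteq> V - {\<mu>} - {w}"
      using assms closed_walk_subset_V[OF leaf_edge l_in_leaf_edge] m_notin_W[OF leaf_edge l_in_leaf_edge] by auto
    show "\<forall>j\<le>k. Wl ! (2 * j) \<in> V - (V - X) \<and> closed_nbhd V E (Wl ! (2 * j))
      \<subseteq> insert (Wl ! (2 * j)) {b. {Wl ! (2 * j), b} \<in> path_edges (closed_walk \<mu> Wl)}"
      using even_position_undominated[OF leaf_edge l_in_leaf_edge] k leaf_unique by simp
  qed (use k distinct_W[OF leaf_edge l_in_leaf_edge] m_notin_W[OF leaf_edge l_in_leaf_edge] in auto)
qed

lemma p_neighbour_in_Wp:
  assumes "{p, b} \<in> path_edges (closed_walk \<mu> Wp)"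
  shows "b \<in> insert \<mu> (odd_positions Wp)"
proof -
  obtain i where i: "2 * i < length Wp" "Wp ! (2 * i) = p"
    using W_even_position[OF leaf_edge p_in_leaf_edge] by blast
  then have "b = \<mu> \<or> (0 < 2 * i \<and> b = Wp ! (2 * i - 1)) \<or> (Suc (2 * i) < length Wp \<and> b = Wp ! Suc (2 * i))"
    using closed_walk_neighbour[OF distinct_W[OF leaf_edge p_in_leaf_edge] m_notin_W[OF leaf_edge p_in_leaf_edge] i(1)]
      assms by simp
  then show ?thesis using i(1) unfolding odd_positions_def by fastforce
qed

text \<open>Once Staller holds \<open>\<mu>\<close> and the odd positions of \<open>Wp\<close>, the vertex \<open>p\<close> has no
  unclaimed neighbours outside the reduced graph, so the reduced game can be played.\<close>

lemma staller_wins_reduced_after_Wp: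
  assumes "staller_wins reduced_V reduced_E (reduced_V - X) {} reduced_V True"
    and "reduced_V \<subseteq> U" "finite U"
  shows "staller_wins V E (V - X) (insert \<mu> (odd_positions Wp)) U True"
proof (rule staller_wins_from_subgame[OF assms(1) _ assms(2) _ assms(3)])
  interpret reduced: bipartite_cactus_decomposition "XF - {l}" "ET - {{l, p}}" m W reduced_V reduced_E X
    by (rule reduced)
  show "\<forall>x\<in>reduced_V - (reduced_V - X). x \<in> V - (V - X) \<and>
    closed_nbhd V E x \<subseteq> insert \<mu> (odd_positions Wp) \<union> closed_nbhd reduced_V reduced_E x"
  proof (intro ballI conjI)
    fix x assume x: "x \<in> reduced_V - (reduced_V - X)"
    then show "x \<in> V - (V - X)" using reduced_V_subset by blast
    show "closed_nbhd V E x \<subseteq> insert \<mu> (odd_positions Wp) \<union> closed_nbhd reduced_V reduced_E x"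
    proof
    fix b assume b: "b \<in> closed_nbhd V E x"
    show "b \<in> insert \<mu> (odd_positions Wp) \<union> closed_nbhd reduced_V reduced_E x"
    proof (cases "b = x")
      case False
      then have "{x, b} \<in> E" using b unfolding closed_nbhd_def by (auto simp: insert_commute)
      then consider "{x, b} \<in> reduced_E" | "x = p" "{p, b} \<in> path_edges (closed_walk \<mu> Wp)"
        using edge_at_reduced_V x by blast
      then show ?thesis
      proof cases
        case 1
        then have "b \<in> reduced_V"
          using wf_graph_edgeD[OF reduced.wf_graph_V_E 1] by (auto simp: doubleton_eq_iff)
        then show ?thesis using 1 unfolding closed_nbhd_def by (auto simp: insert_commute)
      next
        case 2
        then show ?thesis using p_neighbour_in_Wp by blast
      qed
    qed (simp add: closed_nbhd_def)
    qed
  qed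
qed simp

lemma staller_wins_through_Wp:
  assumes "staller_wins reduced_V reduced_E (reduced_V - X) {} reduced_V True" and "w \<in> set Wl"
  shows "staller_wins V E (V - X) {\<mu>} (V - {\<mu>} - {w}) True"
proof -
  obtain i where i: "2 * i < length Wp" "Wp ! (2 * i) = p"
    using W_even_position[OF leaf_edge p_in_leaf_edge] by blast
  obtain k where k: "length Wp = 2 * k + 1" using odd_length_W[OF leaf_edge p_in_leaf_edge] by (blast elim: oddE)
  have Wp: "distinct Wp" "\<mu> \<notin> set Wp" "set Wp \<subseteq> V"
    using distinct_W m_notin_W closed_walk_subset_V leaf_edge p_in_leaf_edge by auto
  have finite: "finite (V - {\<mu>} - {w})" using wf_graph_V_E unfolding wf_graph_def by simp
  show ?thesis
  proof (rule staller_wins_forcing_to_position[OF finite _ Wp(1,2) k, where i = i])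
    show "i \<le> k" using i(1) k by simp
    show "set Wp - {Wp ! (2 * i)} \<subseteq> V - {\<mu>} - {w}"
      using Wp assms(2) Wl_Wp_disjoint by blast
    show "\<forall>j\<le>k. j \<noteq> i \<longrightarrow> Wp ! (2 * j) \<in> V - (V - X) \<and> closed_nbhd V E (Wp ! (2 * j))
      \<subseteq> insert (Wp ! (2 * j)) {b. {Wp ! (2 * j), b} \<in> path_edges (closed_walk \<mu> Wp)}"
    proof (intro allI impI)
      fix j assume "j \<le> k" "j \<noteq> i"
      then have "2 * j < length Wp" using k by simp
      then have "Wp ! (2 * j) \<noteq> p"
        using i Wp(1) \<open>j \<noteq> i\<close> by (metis mult_left_cancel nth_eq_iff_index_eq zero_neq_numeral)
      then show "Wp ! (2 * j) \<in> V - (V - X) \<and> closed_nbhd V E (Wp ! (2 * j))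
        \<subseteq> insert (Wp ! (2 * j)) {b. {Wp ! (2 * j), b} \<in> path_edges (closed_walk \<mu> Wp)}"
        using even_position_undominated[OF leaf_edge p_in_leaf_edge \<open>2 * j < length Wp\<close>] by blast
    qed
    have "reduced_V \<subseteq> V - {\<mu>} - {w} - (set Wp - {p})"
    proof
      fix v assume v: "v \<in> reduced_V"
      have "v \<noteq> w" using v assms(2) Wl_Int_reduced_V by blast
      moreover have "v \<in> set Wp \<Longrightarrow> v = p" using v Wp_Int_reduced_V by blast
      ultimately show "v \<in> V - {\<mu>} - {w} - (set Wp - {p})"
        using v reduced_V_subset mu_notin_reduced_V by blast
    qed
    then show "staller_wins V E (V - X) ({\<mu>} \<union> odd_positions Wp) (V - {\<mu>} - {w} - (set Wp - {Wp ! (2 * i)})) True"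
      using staller_wins_reduced_after_Wp[OF assms(1)] finite i(2) by simp
  qed simp
qed

text \<open>Staller opens with \<open>\<mu>\<close>. If Dominator answers outside \<open>Wl\<close>, Staller wins along \<open>Wl\<close>;
  otherwise she forces her way through \<open>Wp\<close> and continues with the reduced game.\<close>

lemma staller_wins_from_reduced:
  assumes "staller_wins reduced_V reduced_E (reduced_V - X) {} reduced_V True"
  shows "staller_wins V E (V - X) {} V True"
proof (rule staller_wins.stmove)
  show "\<mu> \<in> V" using vertices leaf_edge by blast
  have "l \<in> V - {\<mu>}"
    using end_in_W[OF leaf_edge l_in_leaf_edge] closed_walk_subset_V[OF leaf_edge l_in_leaf_edge]
      m_notin_W[OF leaf_edge l_in_leaf_edge] by auto
  moreover have "staller_wins V E (V - X) {\<mu>} (V - {\<mu>} - {w}) True" for w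
    by (cases "w \<in> set Wl") (use staller_wins_through_Wp[OF assms] staller_wins_along_Wl in auto)
  ultimately show "staller_wins V E (V - X) (insert \<mu> {}) (V - {\<mu>}) False"
    by (auto intro: staller_wins.dommove)
qed

lemma Union_reduced_pairing:
  assumes "pairing_avoiding reduced_E A u P"
  shows "\<Union> P \<subseteq> reduced_V - {u}"
proof -
  interpret reduced: bipartite_cactus_decomposition "XF - {l}" "ET - {{l, p}}" m W reduced_V reduced_E X
    by (rule reduced)
  have "q \<subseteq> reduced_V" if "q \<in> reduced_E" for q
    using wf_graph_edgeD[OF reduced.wf_graph_V_E that] by blast
  then show ?thesis using assms unfolding pairing_avoiding_def by blast
qed

lemma pairing_at_reduced_vertex:
  assumes "v \<in> reduced_V" "pairing_avoiding reduced_E (reduced_V \<inter> X) v P'"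
  shows "\<exists>P. pairing_avoiding E (V \<inter> X) v P"
proof -
  obtain i where i: "2 * i < length Wp" "Wp ! (2 * i) = p"
    using W_even_position[OF leaf_edge p_in_leaf_edge] by blast
  let ?A = "walk_pairs \<mu> Wl" and ?B = "walk_pairs_avoiding Wp i"
  have P': "P' \<subseteq> reduced_E" "disjoint P'" "reduced_V \<inter> X - {v} \<subseteq> \<Union> P'"
    using assms(2) unfolding pairing_avoiding_def by auto
  have UP': "\<Union> P' \<subseteq> reduced_V - {v}" by (rule Union_reduced_pairing[OF assms(2)])
  note A = walk_pairs_W[OF leaf_edge l_in_leaf_edge]
  note B = walk_pairs_avoiding_W[OF leaf_edge p_in_leaf_edge i(1), unfolded i(2)]
  have UA: "\<Union> ?A = insert \<mu> (set Wl)" and UB: "\<Union> ?B = set Wp - {p}" by (fact A(3), fact B(3))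
  have "P' \<union> ?A \<union> ?B \<subseteq> E" using P'(1) reduced_E_subset A(1) B(1) by blast
  moreover have "disjoint (P' \<union> ?A \<union> ?B)"
  proof (intro disjoint_union P'(2) A(2) B(2))
    show "\<Union> P' \<inter> \<Union> ?A = {}"
      unfolding UA using UP' Wl_Int_reduced_V mu_notin_reduced_V by blast
    show "\<Union> (P' \<union> ?A) \<inter> \<Union> ?B = {}"
      unfolding Union_Un_distrib UA UB
      using UP' Wp_Int_reduced_V Wl_Wp_disjoint m_notin_W[OF leaf_edge p_in_leaf_edge] by blast
  qed
  moreover have "v \<notin> \<Union> (P' \<union> ?A \<union> ?B)"
    unfolding Union_Un_distrib UA UB
    using assms(1) UP' Wl_Int_reduced_V Wp_Int_reduced_V mu_notin_reduced_V by blast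
  moreover have "V \<inter> X - {v} \<subseteq> \<Union> (P' \<union> ?A \<union> ?B)"
  proof
    fix x assume x: "x \<in> V \<inter> X - {v}"
    then consider "x \<in> reduced_V" | "x \<in> insert \<mu> (set Wl)" | "x \<in> set Wp - {p}"
      using V_subset_reduced_V p_in_reduced_V by blast
    then show "x \<in> \<Union> (P' \<union> ?A \<union> ?B)"
    proof cases
      case 1 then show ?thesis using x P'(3) by blast
    next
      case 2 then show ?thesis using UA by blast
    next
      case 3 then show ?thesis using UB by blast
    qed
  qed
  ultimately show ?thesis unfolding pairing_avoiding_def by blast
qed

lemma pairing_at_new_vertex:
  assumes ab: "{a, b} = {l, p}" and v: "v \<in> set (W a {l, p})" "v \<in> X" "v \<noteq> p"
    and P': "pairing_avoiding reduced_E (reduced_V \<inter> X) p P'"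
  shows "\<exists>P. pairing_avoiding E (V \<inter> X) v P"
proof -
  let ?Wa = "W a {l, p}" and ?Wb = "W b {l, p}"
  have a: "a \<in> {l, p}" and b: "b \<in> {l, p}" using ab by auto
  have Wa_Wb: "set ?Wa \<inter> set ?Wb = {}" "set ?Wa \<union> set ?Wb = set Wl \<union> set Wp"
    using ab Wl_Wp_disjoint leaf_ne by (auto simp: doubleton_eq_iff)
  have Int_reduced: "set ?Wa \<inter> reduced_V \<subseteq> {p}" "set ?Wb \<inter> reduced_V \<subseteq> {p}"
    using ab Wl_Int_reduced_V Wp_Int_reduced_V by (auto simp: doubleton_eq_iff)
  obtain j where j: "j < length ?Wa" "?Wa ! j = v" using v(1) by (auto simp: in_set_conv_nth)
  then obtain i where i: "2 * i < length ?Wa" "?Wa ! (2 * i) = v"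
    using W_nth_in_X_iff[OF leaf_edge a j(1)] v(2) by (auto elim: evenE)
  let ?A = "walk_pairs_avoiding ?Wa i" and ?B = "walk_pairs \<mu> ?Wb"
  have P'_facts: "P' \<subseteq> reduced_E" "disjoint P'" "reduced_V \<inter> X - {p} \<subseteq> \<Union> P'"
    using P' unfolding pairing_avoiding_def by auto
  have UP': "\<Union> P' \<subseteq> reduced_V - {p}" by (rule Union_reduced_pairing[OF P'])
  note A = walk_pairs_avoiding_W[OF leaf_edge a i(1), unfolded i(2)]
  note B = walk_pairs_W[OF leaf_edge b]
  have UA: "\<Union> ?A = set ?Wa - {v}" and UB: "\<Union> ?B = insert \<mu> (set ?Wb)" by (fact A(3), fact B(3))
  have mu: "\<mu> \<notin> set ?Wa" by (rule m_notin_W[OF leaf_edge a])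
  have "P' \<union> ?A \<union> ?B \<subseteq> E" using P'_facts(1) reduced_E_subset A(1) B(1) by blast
  moreover have "disjoint (P' \<union> ?A \<union> ?B)"
  proof (intro disjoint_union P'_facts(2) A(2) B(2))
    show "\<Union> P' \<inter> \<Union> ?A = {}" unfolding UA using UP' Int_reduced(1) by blast
    show "\<Union> (P' \<union> ?A) \<inter> \<Union> ?B = {}"
      unfolding Union_Un_distrib UA UB using UP' Int_reduced(2) mu_notin_reduced_V Wa_Wb(1) mu by blast
  qed
  moreover have "v \<notin> \<Union> (P' \<union> ?A \<union> ?B)"
    unfolding Union_Un_distrib UA UB using v UP' Int_reduced(1) Wa_Wb(1) mu by blast
  moreover have "V \<inter> X - {v} \<subseteq> \<Union> (P' \<union> ?A \<union> ?B)"
  proof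
    fix x assume x: "x \<in> V \<inter> X - {v}"
    have "x \<noteq> \<mu>" using x m_notin_X[OF leaf_edge l_in_leaf_edge] by blast
    then consider "x \<in> reduced_V" "x \<noteq> p" | "x \<in> set ?Wa" | "x \<in> set ?Wb"
      using x V_subset_reduced_V Wa_Wb(2) end_in_W[OF leaf_edge p_in_leaf_edge] by blast
    then show "x \<in> \<Union> (P' \<union> ?A \<union> ?B)"
    proof cases
      case 1 then show ?thesis using x P'_facts(3) by blast
    next
      case 2 then show ?thesis using x UA by blast
    next
      case 3 then show ?thesis using UB by blast
    qed
  qed
  ultimately show ?thesis unfolding pairing_avoiding_def by blast
qed

lemma pairing_from_reduced:
  assumes reduced_pairing: "\<And>u. u \<in> reduced_V \<inter> X \<Longrightarrow> \<exists>P. pairing_avoiding reduced_E (reduced_V \<inter> X) u P"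
    and v: "v \<in> V \<inter> X"
  shows "\<exists>P. pairing_avoiding E (V \<inter> X) v P"
proof (cases "v \<in> reduced_V")
  case True
  then show ?thesis using reduced_pairing v pairing_at_reduced_vertex by blast
next
  case False
  have "p \<in> X" using XF_subset_X end_in_XF[OF leaf_edge p_in_leaf_edge] by blast
  then obtain P' where P': "pairing_avoiding reduced_E (reduced_V \<inter> X) p P'"
    using reduced_pairing p_in_reduced_V by blast
  have "v \<noteq> \<mu>" using v m_notin_X[OF leaf_edge l_in_leaf_edge] by blast
  then consider "v \<in> set Wl" | "v \<in> set Wp" using v False V_subset_reduced_V by blast
  then show ?thesis
  proof cases
    case 1
    then show ?thesis using pairing_at_new_vertex[OF _ _ _ _ P'] v False p_in_reduced_V by blast
  next
    case 2
    have "{p, l} = {l, p}" by blast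
    then show ?thesis using pairing_at_new_vertex[OF _ 2 _ _ P'] v False p_in_reduced_V by blast
  qed
qed

end

lemma bipartite_cactus_decomposition_induct [consumes 1, case_names single_vertex leaf]:
  assumes "bipartite_cactus_decomposition XF ET m W V E X"
    and single_vertex: "\<And>XF ET V E. bipartite_cactus_decomposition XF ET m W V E X \<Longrightarrow> card XF \<le> 1 \<Longrightarrow> P XF ET V E"
    and leaf: "\<And>XF ET V E l p. cactus_leaf XF ET m W V E X l p \<Longrightarrow>
      P (XF - {l}) (ET - {{l, p}}) (cactus_leaf.reduced_V XF ET m W l p) (cactus_leaf.reduced_E ET m W l p)
      \<Longrightarrow> P XF ET V E"
  shows "P XF ET V E"
  using assms(1)
proof (induction "card XF" arbitrary: XF ET V E rule: less_induct)
  case less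
  interpret bipartite_cactus_decomposition XF ET m W V E X by (rule less.prems)
  show ?case
  proof (cases "card XF \<le> 1")
    case True
    with less.prems show ?thesis by (rule single_vertex)
  next
    case False
    obtain l p where "{l, p} \<in> ET" "l \<noteq> p" "\<forall>e\<in>ET. l \<in> e \<longrightarrow> e = {l, p}"
      by (rule tree_has_leaf[OF tree False])
    then have leaf_XF: "cactus_leaf XF ET m W V E X l p"
      unfolding cactus_leaf_def cactus_leaf_axioms_def using less.prems by blast
    then show ?thesis
      using less.hyps[OF cactus_leaf.card_XF_reduced_less[OF leaf_XF] cactus_leaf.reduced[OF leaf_XF]]
      by (rule leaf)
  qed
qed

lemma staller_wins_cactus:
  assumes "bipartite_cactus_decomposition XF ET m W V E X"
  shows "staller_wins V E (V - X) {} V True"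
  using assms
proof (induction rule: bipartite_cactus_decomposition_induct)
  case (single_vertex XF ET V E)
  then show ?case by (rule bipartite_cactus_decomposition.staller_wins_single_vertex)
next
  case (leaf XF ET V E l p)
  then show ?case by (rule cactus_leaf.staller_wins_from_reduced)
qed

lemma pairing_cactus:
  assumes "bipartite_cactus_decomposition XF ET m W V E X" "v \<in> V \<inter> X"
  shows "\<exists>P. pairing_avoiding E (V \<inter> X) v P"
  using assms
proof (induction arbitrary: v rule: bipartite_cactus_decomposition_induct)
  case (single_vertex XF ET V E)
  then have "pairing_avoiding E (V \<inter> X) v {}"
    by (intro bipartite_cactus_decomposition.pairing_single_vertex) auto
  then show ?case by blast
next
  case (leaf XF ET V E l p)
  show ?case by (rule cactus_leaf.pairing_from_reduced[OF leaf.hyps(1) leaf.IH leaf.prems])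
qed

section \<open>F-cacti have gadget decompositions\<close>

lemma (in cactus_decomposition) skeleton_edge_only_in_own_walk:
  assumes "e \<in> ET" "x \<in> e" "e1 \<in> ET" "x1 \<in> e1"
    and "{x, m e} \<in> path_edges (closed_walk (m e1) (W x1 e1))"
  shows "x1 = x \<and> e1 = e"
proof -
  have walk: "{x, m e} \<subseteq> insert (m e1) (set (W x1 e1))"
    using path_edges_subset_set[OF assms(5)] by auto
  have "m e \<notin> set (W x1 e1)"
    using W_Int_skeleton[OF assms(3,4)] end_in_XF[OF assms(3,4)] m_notin_XF[OF assms(1)] assms(1) by blast
  then have "e1 = e" using walk inj_m assms(1,3) by (auto dest: inj_onD)
  moreover have "x \<noteq> m e1" using end_in_XF[OF assms(1,2)] m_notin_XF[OF assms(3)] by metis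
  then have "x \<in> set (W x1 e1)" using walk by blast
  then have "x1 = x" by (rule tree_vertex_in_W[OF assms(1-4)])
  ultimately show ?thesis by blast
qed

locale walk_replacement = cactus_decomposition +
  fixes x0 :: 'a and e0 :: "'a set" and N :: "'a list"
  assumes e0: "e0 \<in> ET" "x0 \<in> e0"
    and single: "W x0 e0 = [x0]"
    and distinct_N: "distinct N" and odd_length_N: "odd (length N)"
    and N_even_position: "\<exists>i. 2 * i < length N \<and> N ! (2 * i) = x0"
    and m_notin_N: "m e0 \<notin> set N"
    and N_Int_V: "set N \<inter> V = {x0}"
begin

definition W' :: "'a \<Rightarrow> 'a set \<Rightarrow> 'a list" where
  "W' x e = (if x = x0 \<and> e = e0 then N else W x e)"

lemma W'_other: "\<not> (x = x0 \<and> e = e0) \<Longrightarrow> W' x e = W x e"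
  unfolding W'_def by auto

lemma W'_at: "W' x0 e0 = N"
  unfolding W'_def by simp

lemma vertices_replaced: "V \<union> set N = XF \<union> m ` ET \<union> (\<Union>e\<in>ET. \<Union>x\<in>e. set (W' x e))"
  unfolding vertices
proof (intro equalityI subsetI)
  fix v assume "v \<in> XF \<union> m ` ET \<union> (\<Union>e\<in>ET. \<Union>x\<in>e. set (W x e)) \<union> set N"
  then consider "v \<in> XF \<union> m ` ET" | "v \<in> set N" | e x where "e \<in> ET" "x \<in> e" "v \<in> set (W x e)"
    by blast
  then show "v \<in> XF \<union> m ` ET \<union> (\<Union>e\<in>ET. \<Union>x\<in>e. set (W' x e))"
  proof cases
    case 1 then show ?thesis by blast
  next
    case 2
    then have "v \<in> set (W' x0 e0)" by (simp add: W'_at)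
    then show ?thesis using e0 by blast
  next
    case (3 e x)
    show ?thesis
    proof (cases "x = x0 \<and> e = e0")
      case True then show ?thesis using 3 single end_in_XF[OF e0] by auto
    next
      case False
      then have "v \<in> set (W' x e)" using 3 by (simp add: W'_other)
      then show ?thesis using 3 by blast
    qed
  qed
next
  fix v assume "v \<in> XF \<union> m ` ET \<union> (\<Union>e\<in>ET. \<Union>x\<in>e. set (W' x e))"
  then consider "v \<in> XF \<union> m ` ET" | e x where "e \<in> ET" "x \<in> e" "v \<in> set (W' x e)" by blast
  then show "v \<in> XF \<union> m ` ET \<union> (\<Union>e\<in>ET. \<Union>x\<in>e. set (W x e)) \<union> set N"
  proof cases
    case 1 then show ?thesis by blast
  next
    case (2 e x)
    show ?thesis
    proof (cases "x = x0 \<and> e = e0")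
      case True then show ?thesis using 2 W'_at by simp
    next
      case False
      then have "v \<in> set (W x e)" using 2 by (simp add: W'_other)
      then show ?thesis using 2 by blast
    qed
  qed
qed

lemma edges_replaced:
  "E - {{x0, m e0}} \<union> path_edges (closed_walk (m e0) N) =
    (\<Union>e\<in>ET. \<Union>x\<in>e. path_edges (closed_walk (m e) (W' x e)))"
proof -
  have old: "path_edges (closed_walk (m e0) (W x0 e0)) = {{x0, m e0}}"
    using single by (simp add: insert_commute)
  have other: "{x0, m e0} \<notin> path_edges (closed_walk (m e) (W x e))" if "e \<in> ET" "x \<in> e" "\<not> (x = x0 \<and> e = e0)" for x e
    using skeleton_edge_only_in_own_walk[OF e0 that(1,2)] that(3) by blast
  show ?thesis
  proof (intro equalityI subsetI)
    fix q assume q: "q \<in> E - {{x0, m e0}} \<union> path_edges (closed_walk (m e0) N)"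
    show "q \<in> (\<Union>e\<in>ET. \<Union>x\<in>e. path_edges (closed_walk (m e) (W' x e)))"
    proof (cases "q \<in> path_edges (closed_walk (m e0) N)")
      case True
      then have "q \<in> path_edges (closed_walk (m e0) (W' x0 e0))" by (simp add: W'_at)
      then show ?thesis using e0 by blast
    next
      case False
      then have "q \<in> E" "q \<noteq> {x0, m e0}" using q by auto
      then obtain e x where ex: "e \<in> ET" "x \<in> e" "q \<in> path_edges (closed_walk (m e) (W x e))"
        unfolding edges by blast
      then have "\<not> (x = x0 \<and> e = e0)" using old \<open>q \<noteq> {x0, m e0}\<close> by auto
      then have "q \<in> path_edges (closed_walk (m e) (W' x e))" using ex(3) by (simp add: W'_other)
      then show ?thesis using ex(1,2) by blast
    qed
  next
    fix q assume "q \<in> (\<Union>e\<in>ET. \<Union>x\<in>e. path_edges (closed_walk (m e) (W' x e)))"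
    then obtain e x where ex: "e \<in> ET" "x \<in> e" "q \<in> path_edges (closed_walk (m e) (W' x e))" by blast
    show "q \<in> E - {{x0, m e0}} \<union> path_edges (closed_walk (m e0) N)"
    proof (cases "x = x0 \<and> e = e0")
      case True
      then show ?thesis using ex(3) by (simp add: W'_at)
    next
      case False
      then have q: "q \<in> path_edges (closed_walk (m e) (W x e))" using ex(3) by (simp add: W'_other)
      then have "q \<noteq> {x0, m e0}" using other[OF ex(1,2) False] by blast
      moreover have "q \<in> E" using q closed_walk_edges_subset_E[OF ex(1,2)] by blast
      ultimately show ?thesis by blast
    qed
  qed
qed

lemma W'_disjoint:
  assumes "e \<in> ET" "x \<in> e" "e' \<in> ET" "x' \<in> e'" "(x, e) \<noteq> (x', e')"
  shows "(set (W' x e) - {x}) \<inter> set (W' x' e') = {}"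
proof -
  have W_in_V: "set (W a f) \<subseteq> V" if "f \<in> ET" "a \<in> f" for a f using vertices that by blast
  consider "x = x0 \<and> e = e0" | "x' = x0 \<and> e' = e0" | "\<not> (x = x0 \<and> e = e0)" "\<not> (x' = x0 \<and> e' = e0)"
    by blast
  then show ?thesis
  proof cases
    case 1
    then have W': "W' x e = N" "W' x' e' = W x' e'" using assms(5) W'_at W'_other by auto
    show ?thesis unfolding W' using 1 W_in_V[OF assms(3,4)] N_Int_V by blast
  next
    case 2
    then have W': "W' x e = W x e" "W' x' e' = N" using assms(5) W'_at W'_other by auto
    have "x0 \<notin> set (W x e) - {x}" using tree_vertex_in_W[OF e0 assms(1,2)] by blast
    then show ?thesis unfolding W' using W_in_V[OF assms(1,2)] N_Int_V by auto
  next
    case 3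
    then show ?thesis using W_disjoint[OF assms] W'_other by simp
  qed
qed

lemma replaced:
  "cactus_decomposition XF ET m W' (V \<union> set N) (E - {{x0, m e0}} \<union> path_edges (closed_walk (m e0) N))"
proof unfold_locales
  show "is_tree XF ET" by (rule tree)
  show "inj_on m ET" by (rule inj_m)
  show "e \<in> ET \<Longrightarrow> m e \<notin> XF" for e by (rule m_notin_XF)
  show "set (W' x e) \<inter> (XF \<union> m ` ET) = {x}" if ex: "e \<in> ET" "x \<in> e" for e x
  proof (cases "x = x0 \<and> e = e0")
    case True
    have "set N \<inter> (XF \<union> m ` ET) = {x0}" using N_Int_V vertices end_in_XF[OF e0] by blast
    then show ?thesis using True W'_at by simp
  next
    case False
    then show ?thesis using W_Int_skeleton[OF ex] W'_other by simp
  qed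
  show "distinct (W' x e)" "odd (length (W' x e))" "\<exists>i. 2 * i < length (W' x e) \<and> W' x e ! (2 * i) = x"
    if ex: "e \<in> ET" "x \<in> e" for e x
    using distinct_W[OF ex] odd_length_W[OF ex] W_even_position[OF ex] distinct_N odd_length_N
      N_even_position W'_at W'_other by (cases "x = x0 \<and> e = e0"; simp)+
  show "\<lbrakk>e \<in> ET; x \<in> e; e' \<in> ET; x' \<in> e'; (x, e) \<noteq> (x', e')\<rbrakk>
    \<Longrightarrow> (set (W' x e) - {x}) \<inter> set (W' x' e') = {}" for e x e' x'
    by (rule W'_disjoint)
qed (rule vertices_replaced, rule edges_replaced)

end

lemma (in cactus_decomposition) replace_single_edge_by_cycle:
  assumes e0: "e0 \<in> ET" "x0 \<in> e0" and single: "W x0 e0 = [x0]"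
    and paths: "odd_path p x0 (m e0)" "odd_path q x0 (m e0)" "set p \<inter> set q = {x0, m e0}"
    and new: "(set p \<union> set q) \<inter> V = {x0, m e0}"
  shows "\<exists>W'. cactus_decomposition XF ET m W' (V \<union> set p \<union> set q)
      (E - {{x0, m e0}} \<union> path_edges p \<union> path_edges q)
    \<and> (\<forall>x e. \<not> (x = x0 \<and> e = e0) \<longrightarrow> W' x e = W x e)"
proof -
  let ?N = "glue_paths p q"
  have N: "insert (m e0) (set ?N) = set p \<union> set q" "m e0 \<notin> set ?N"
    using set_glue_paths[OF paths] b_notin_glue_paths[OF paths] by auto
  have "walk_replacement XF ET m W V E x0 e0 ?N"
  proof unfold_locales
    have "x0 \<noteq> m e0" using end_in_XF[OF e0] m_notin_XF[OF e0(1)] by metis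
    moreover have "x0 \<in> set p" by (rule odd_paths_facts(11)[OF paths])
    ultimately show "set ?N \<inter> V = {x0}" using N new by blast
  qed (use e0 single N distinct_glue_paths[OF paths] odd_length_glue_paths[OF paths]
      glue_paths_even_position[OF paths] in auto)
  then interpret walk_replacement XF ET m W V E x0 e0 ?N .
  have "V \<union> set p \<union> set q = V \<union> set ?N" using N vertices e0 by blast
  moreover have "E - {{x0, m e0}} \<union> path_edges p \<union> path_edges q =
      E - {{x0, m e0}} \<union> path_edges (closed_walk (m e0) ?N)"
    using path_edges_glue_paths[OF paths] by auto
  ultimately show ?thesis using replaced W'_other by auto
qed

lemma subdivision_cactus_decomposition:
  assumes tree: "is_tree XF ET" and bij: "bij_betw m ET (VF - XF)" and "XF \<subseteq> VF"
    and EF: "EF = {{x, m e} | x e. e \<in> ET \<and> x \<in> e}"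
  shows "cactus_decomposition XF ET m (\<lambda>x e. [x]) VF EF"
proof unfold_locales
  have end_in_XF: "x \<in> XF" if "e \<in> ET" "x \<in> e" for e x
    using wf_graph_edgeD[of XF ET e] tree that unfolding is_tree_def by blast
  have image: "m ` ET = VF - XF" using bij by (rule bij_betw_imp_surj_on)
  show "inj_on m ET" using bij by (rule bij_betw_imp_inj_on)
  show "e \<in> ET \<Longrightarrow> m e \<notin> XF" for e using image by blast
  show "set [x] \<inter> (XF \<union> m ` ET) = {x}" if "e \<in> ET" "x \<in> e" for e x using end_in_XF[OF that] by auto
  show "VF = XF \<union> m ` ET \<union> (\<Union>e\<in>ET. \<Union>x\<in>e. set [x])" using image assms(3) end_in_XF by auto
  show "EF = (\<Union>e\<in>ET. \<Union>x\<in>e. path_edges (closed_walk (m e) [x]))"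
    unfolding EF by (auto simp: insert_commute)
qed (use tree in auto)

lemma dor_cactus_decomposition:
  assumes tree: "is_tree XF ET" and bij: "bij_betw m ET (VF - XF)" and "XF \<subseteq> VF"
    and EF: "EF = {{x, m e} | x e. e \<in> ET \<and> x \<in> e}"
    and "dor VF EF V E R"
  shows "\<exists>W. cactus_decomposition XF ET m W V E \<and> (\<forall>e\<in>ET. \<forall>x\<in>e. {x, m e} \<notin> R \<longrightarrow> W x e = [x])"
  using assms(5)
proof (induction rule: dor.induct)
  case base
  then show ?case using subdivision_cactus_decomposition[OF assms(1-4)] by blast
next
  case (step V E R x y p q)
  then obtain W where W: "cactus_decomposition XF ET m W V E"
    and unreplaced: "\<forall>e\<in>ET. \<forall>x\<in>e. {x, m e} \<notin> R \<longrightarrow> W x e = [x]" by blast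
  interpret cactus_decomposition XF ET m W V E by (rule W)
  obtain x0 e0 where e0: "e0 \<in> ET" "x0 \<in> e0" and xy: "{x, y} = {x0, m e0}"
    using step.hyps(2) unfolding EF by blast
  define p' where "p' = (if x = x0 then p else rev p)"
  define q' where "q' = (if x = x0 then q else rev q)"
  have "x = x0 \<and> y = m e0 \<or> x = m e0 \<and> y = x0" using xy by (auto simp: doubleton_eq_iff)
  then have paths: "odd_path p' x0 (m e0)" "odd_path q' x0 (m e0)"
    using step.hyps(6,7) odd_path_rev unfolding p'_def q'_def by auto
  have sets: "set p' = set p" "set q' = set q" "path_edges p' = path_edges p" "path_edges q' = path_edges q"
    unfolding p'_def q'_def by (simp_all add: path_edges_rev)
  have "W x0 e0 = [x0]" using unreplaced e0 step.hyps(3) xy by auto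
  then obtain W' where dec: "cactus_decomposition XF ET m W' (V \<union> set p' \<union> set q')
      (E - {{x0, m e0}} \<union> path_edges p' \<union> path_edges q')"
    and W': "\<forall>a e. \<not> (a = x0 \<and> e = e0) \<longrightarrow> W' a e = W a e"
    using replace_single_edge_by_cycle[OF e0 _ paths] step.hyps(8,9) sets xy by auto
  have "W' a e = [a]" if "e \<in> ET" "a \<in> e" "{a, m e} \<notin> insert {x, y} R" for e a
  proof -
    have "\<not> (a = x0 \<and> e = e0)" using that(3) xy by auto
    then show ?thesis using W' unreplaced that by auto
  qed
  moreover have "cactus_decomposition XF ET m W' (V \<union> set p \<union> set q)
      (E - {{x, y}} \<union> path_edges p \<union> path_edges q)"
    using dec unfolding sets xy .
  ultimately show ?case by blast
qed

lemma F_cactus_decomposition: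
  assumes "is_F_cactus VF EF XF V E" "XF \<subseteq> X" "\<forall>e\<in>E. card (e \<inter> X) = 1"
  obtains ET m W where "bipartite_cactus_decomposition XF ET m W V E X"
proof -
  obtain R where F: "in_S VF EF XF" "dor VF EF V E R"
    using assms(1) unfolding is_F_cactus_def by blast
  obtain ET where tree: "is_tree XF ET" and "is_subdivision XF ET VF EF"
    using F(1) unfolding in_S_def by blast
  then obtain m where "XF \<subseteq> VF" "bij_betw m ET (VF - XF)" "EF = {{x, m e} | x e. e \<in> ET \<and> x \<in> e}"
    unfolding is_subdivision_def by blast
  then obtain W where "cactus_decomposition XF ET m W V E"
    using dor_cactus_decomposition[OF tree _ _ _ F(2)] by blast
  then have "bipartite_cactus_decomposition XF ET m W V E X"
    using assms(2,3) by (intro bipartite_cactus_decomposition.intro bipartite_cactus_decomposition_axioms.intro)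
  then show thesis by (rule that)
qed

theorem theorem5p2:
  fixes VF V :: "'a set" and EF E :: "'a set set" and XF X :: "'a set"
  assumes "is_F_cactus VF EF XF V E"
    and "XF \<subseteq> X" and "X \<subseteq> V"
    and "\<forall>e\<in>E. card (e \<inter> X) = 1"
  shows "atomic_MBD_critical V E (V - X)"
proof -
  obtain ET m W where H: "bipartite_cactus_decomposition XF ET m W V E X"
    using F_cactus_decomposition[OF assms(1,2,4)] .
  interpret bipartite_cactus_decomposition XF ET m W V E X by (rule H)
  have "staller_wins_MBD V E (V - X)"
    using staller_wins_cactus[OF H] unfolding staller_wins_MBD_def .
  moreover have "dominator_wins_MBD V E ((V - X) \<union> {v})" if v: "v \<in> V - (V - X)" for v
  proof -
    obtain P where "pairing_avoiding E (V \<inter> X) v P" using pairing_cactus[OF H, of v] v by blast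
    then show ?thesis by (rule dominator_wins_by_edge_pairing[OF wf_graph_V_E]) auto
  qed
  moreover have "\<exists>b\<in>V. {a, b} \<in> E" if a: "a \<in> V - X" for a
  proof -
    obtain x where "x \<in> XF" using tree unfolding is_tree_def by blast
    then have "x \<in> V" "x \<noteq> a" using assms(2,3) a by auto
    moreover have "connected_graph V E" using assms(1) unfolding is_F_cactus_def is_cactus_def by blast
    ultimately show ?thesis using connected_graph_has_neighbour[OF wf_graph_V_E] a by blast
  qed
  moreover have "\<forall>a\<in>V - X. \<forall>b\<in>V - X. {a, b} \<notin> E"
    using one_end_in_X_independent[OF assms(4)] by blast
  ultimately show ?thesis unfolding atomic_MBD_critical_def MBD_critical_def by blast
qed

end
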